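(* Let $(\mathcal G,(\cdot,\cdot),\mathcal H)$ be a generalized reductive Lie algebra with root system $R$ and let $\dot{\mathcal H}_1,\dots,\dot{\mathcal H}_k$, $\mathcal H(R)$, $\mathcal H^0(R)$ be as in the context. Then (i) the form $(\cdot,\cdot)$ restricted to each $\dot{\mathcal H}_i$ is nondegenerate; (ii) $\mathcal H(R)=\mathcal H^0(R)\oplus\big(\bigoplus_{i=1}^k\dot{\mathcal H}_i\big)$; (iii) $\mathcal H^0(R)=\mathrm{span}_{\mathbb C}\{t_\delta:\delta\in R^0\}$.
   Context: GRLA: $\mathcal G$ complex Lie algebra, $\mathcal H$ subalgebra, $(\cdot,\cdot)$ bilinear form with (GR1) form symmetric, nondegenerate, invariant; (GR2) $\mathcal H$ nontrivial finite-dimensional abelian, self-centralizing, $\mathrm{ad}(h)$ diagonalizable; root spaces $\mathcal G_\alpha$, root system $R=\{\alpha\in\mathcal H^*:\mathcal G_\alpha\ne0\}$; $t_\alpha\in\mathcal H$ with $(t_\alpha,h)=\alpha(h)$, $(\alpha,\beta):=(t_\alpha,t_\beta)$; $R^\times=\{\alpha:(\alpha,\alpha)\ne0\}$, $R^0=R\setminus R^\times$; (GR3) $\mathrm{ad}(x)$ locally nilpotent for $x\in\mathcal G_\alpha$, $\alpha\in R^\times$; (GR4) $R$ discrete; (GR5) $R^\times\neq\emptyset$. Let $R^\times=R^\times_1\cup\dots\cup R^\times_k$ be the partition into classes of the equivalence relation generated by $\alpha\sim\beta$ if $(\alpha,\beta)\ne0$. Let $\mathcal V$ be the real span of $R$,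 $\mathcal V^0=\{v\in\mathcal V:(v,\mathcal V)=0\}$, $\bar{\ }:\mathcal V\to\mathcal V/\mathcal V^0$, $\bar{\mathcal V}_i$ the image of the real span of $R_i^\times$ and $\bar R_i=\{\bar\alpha:\alpha\in R_i^\times\}\cup\{0\}$; for suitable $c_i\neq0$, $\bar R_i$ is an irreducible finite root system in $\bar{\mathcal V}_i$ with respect to $c_i(\cdot,\cdot)$. Choose a base $\{\bar\alpha_{i1},\dots,\bar\alpha_{i\ell_i}\}$ of $\bar R_i$, preimages $\alpha_{ij}\in R_i^\times$, let $\dot{\mathcal V}_i$ be their real span and $\dot R_i=\{\alpha\in\dot{\mathcal V}_i:\bar\alpha\in\bar R_i\}$. Set $\dot{\mathcal H}_i=\mathrm{span}_{\mathbb C}\{t_\alpha:\alpha\in\dot R_i\}$, $\mathcal H(R)=\mathrm{span}_{\mathbb C}\{t_\alpha:\alpha\in R\}$ and $\mathcal H^0(R)=\{h\in\mathcal H(R):(h,\mathcal H(R))=\{0\}\}$. *)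

theory Defs
  imports Main Complex_Main
begin

text \<open>Elements of the dual H* are modelled as functions 'g => complex which are complex linear
on H and vanish outside H (canonical representatives).\<close>

definition lie_algebra :: "(complex \<Rightarrow> 'g::ab_group_add \<Rightarrow> 'g) \<Rightarrow> ('g \<Rightarrow> 'g \<Rightarrow> 'g) \<Rightarrow> bool" where
  "lie_algebra smult br \<longleftrightarrow> vector_space smult \<and>
     (\<forall>x y z. br (x + y) z = br x z + br y z) \<and>
     (\<forall>c x y. br (smult c x) y = smult c (br x y)) \<and>
     (\<forall>x y z. br x (y + z) = br x y + br x z) \<and>
     (\<forall>c x y. br x (smult c y) = smult c (br x y)) \<and>
     (\<forall>x. br x x = 0) \<and>
     (\<forall>x y z. br x (br y z) + br y (br z x) + br z (br x y) = 0)"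

definition dual_of :: "(complex \<Rightarrow> 'g::ab_group_add \<Rightarrow> 'g) \<Rightarrow> 'g set \<Rightarrow> ('g \<Rightarrow> complex) \<Rightarrow> bool" where
  "dual_of smult H f \<longleftrightarrow> (\<forall>x\<in>H. \<forall>y\<in>H. f (x + y) = f x + f y) \<and>
     (\<forall>c. \<forall>x\<in>H. f (smult c x) = c * f x) \<and> (\<forall>x. x \<notin> H \<longrightarrow> f x = 0)"

definition root_space :: "('g \<Rightarrow> 'g \<Rightarrow> 'g) \<Rightarrow> (complex \<Rightarrow> 'g \<Rightarrow> 'g) \<Rightarrow> 'g set \<Rightarrow> ('g \<Rightarrow> complex) \<Rightarrow> 'g set" where
  "root_space br smult H \<alpha> = {x. \<forall>h\<in>H. br h x = smult (\<alpha> h) x}"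

definition roots :: "('g \<Rightarrow> 'g \<Rightarrow> 'g) \<Rightarrow> (complex \<Rightarrow> 'g::ab_group_add \<Rightarrow> 'g) \<Rightarrow> 'g set \<Rightarrow> ('g \<Rightarrow> complex) set" where
  "roots br smult H = {\<alpha>. dual_of smult H \<alpha> \<and> root_space br smult H \<alpha> \<noteq> {0}}"

definition tvec :: "('g \<Rightarrow> 'g \<Rightarrow> complex) \<Rightarrow> 'g set \<Rightarrow> ('g \<Rightarrow> complex) \<Rightarrow> 'g" where
  "tvec B H \<alpha> = (THE t. t \<in> H \<and> (\<forall>h\<in>H. B t h = \<alpha> h))"

definition rform :: "('g \<Rightarrow> 'g \<Rightarrow> complex) \<Rightarrow> 'g set \<Rightarrow> ('g \<Rightarrow> complex) \<Rightarrow> ('g \<Rightarrow> complex) \<Rightarrow> complex" where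
  "rform B H \<alpha> \<beta> = B (tvec B H \<alpha>) (tvec B H \<beta>)"

definition nonisotropic_roots where
  "nonisotropic_roots br smult B H = {\<alpha> \<in> roots br smult H. rform B H \<alpha> \<alpha> \<noteq> 0}"

definition isotropic_roots where
  "isotropic_roots br smult B H = roots br smult H - nonisotropic_roots br smult B H"

text \<open>Discreteness of R in H* (finite dimensional, natural topology = topology of pointwise
convergence on H).\<close>
definition discrete_dual :: "'g set \<Rightarrow> ('g \<Rightarrow> complex) set \<Rightarrow> bool" where
  "discrete_dual H R \<longleftrightarrow> (\<forall>\<alpha>\<in>R. \<exists>F \<epsilon>. finite F \<and> F \<subseteq> H \<and> \<epsilon> > 0 \<and>
      (\<forall>\<beta>\<in>R. (\<forall>h\<in>F. cmod (\<beta> h - \<alpha> h) < \<epsilon>) \<longrightarrow> \<beta> = \<alpha>))"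

definition GRLA :: "(complex \<Rightarrow> 'g::ab_group_add \<Rightarrow> 'g) \<Rightarrow> ('g \<Rightarrow> 'g \<Rightarrow> 'g) \<Rightarrow> ('g \<Rightarrow> 'g \<Rightarrow> complex) \<Rightarrow> 'g set \<Rightarrow> bool" where
  "GRLA smult br B H \<longleftrightarrow>
     lie_algebra smult br \<and>
     \<comment> \<open>GR1: symmetric, bilinear, nondegenerate, invariant form\<close>
     (\<forall>x y z. B (x + y) z = B x z + B y z) \<and>
     (\<forall>c x y. B (smult c x) y = c * B x y) \<and>
     (\<forall>x y. B x y = B y x) \<and>
     (\<forall>x. (\<forall>y. B x y = 0) \<longrightarrow> x = 0) \<and>
     (\<forall>x y z. B (br x y) z = B x (br y z)) \<and>
     \<comment> \<open>GR2\<close>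
     module.subspace smult H \<and>
     (\<forall>x\<in>H. \<forall>y\<in>H. br x y \<in> H) \<and>
     H \<noteq> {0} \<and>
     (\<exists>S. finite S \<and> H = module.span smult S) \<and>
     (\<forall>x\<in>H. \<forall>y\<in>H. br x y = 0) \<and>
     {x. \<forall>h\<in>H. br h x = 0} = H \<and>
     (\<forall>h\<in>H. module.span smult {x. \<exists>c. br h x = smult c x} = UNIV) \<and>
     \<comment> \<open>GR3\<close>
     (\<forall>\<alpha>\<in>nonisotropic_roots br smult B H. \<forall>x\<in>root_space br smult H \<alpha>.
         \<forall>y. \<exists>n. (br x ^^ n) y = 0) \<and>
     \<comment> \<open>GR4\<close>
     discrete_dual H (roots br smult H) \<and>
     \<comment> \<open>GR5\<close>
     nonisotropic_roots br smult B H \<noteq> {}"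

definition rcomb :: "(('g \<Rightarrow> complex) \<Rightarrow> real) \<Rightarrow> ('g \<Rightarrow> complex) set \<Rightarrow> ('g \<Rightarrow> complex)" where
  "rcomb c S = (\<lambda>x. \<Sum>\<beta>\<in>S. complex_of_real (c \<beta>) * \<beta> x)"

definition real_span :: "('g \<Rightarrow> complex) set \<Rightarrow> ('g \<Rightarrow> complex) set" where
  "real_span S = {rcomb c F | c F. finite F \<and> F \<subseteq> S}"

definition Vsp where "Vsp br smult H = real_span (roots br smult H)"

definition V0 where
  "V0 br smult B H = {v \<in> Vsp br smult H. \<forall>w\<in>Vsp br smult H. rform B H v w = 0}"

definition root_rel where
  "root_rel br smult B H = {(\<alpha>, \<beta>). \<alpha> \<in> nonisotropic_roots br smult B H \<and>
       \<beta> \<in> nonisotropic_roots br smult B H \<and> rform B H \<alpha> \<beta> \<noteq> 0}"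

definition root_classes where
  "root_classes br smult B H = nonisotropic_roots br smult B H //
      ((root_rel br smult B H \<union> (root_rel br smult B H)\<inverse>)\<^sup>+ \<union> Id_on (nonisotropic_roots br smult B H))"

text \<open>Bs is a set of preimages alpha_{i1},...,alpha_{il} in the class C of a base of the finite
root system bar R_i (images in V/V^0): the images are linearly independent in V/V^0 and each
bar alpha (alpha in C) is an integral combination with coefficients all of the same sign.\<close>
definition base_preimage where
  "base_preimage br smult B H C Bs \<longleftrightarrow> finite Bs \<and> Bs \<subseteq> C \<and>
     (\<forall>c. rcomb c Bs \<in> V0 br smult B H \<longrightarrow> (\<forall>\<beta>\<in>Bs. c \<beta> = 0)) \<and>
     (\<forall>\<alpha>\<in>C. \<exists>n. 
        ((\<forall>\<beta>\<in>Bs. n \<beta> \<ge> 0) \<or> (\<forall>\<beta>\<in>Bs. n \<beta> \<le> 0)) \<and>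
        (\<lambda>x. \<alpha> x - rcomb (\<lambda>\<beta>. real_of_int (n \<beta>)) Bs x) \<in> V0 br smult B H)"

text \<open>dot R_i = {alpha in dot V_i : bar alpha in bar R_i}, with bar R_i = image of C union {0}.\<close>
definition Rdot where
  "Rdot br smult B H C Bs = {\<alpha> \<in> real_span Bs.
      \<exists>\<beta> \<in> C \<union> {(\<lambda>_. 0)}. (\<lambda>x. \<alpha> x - \<beta> x) \<in> V0 br smult B H}"

definition Hdot where
  "Hdot br smult B H C Bs = module.span smult (tvec B H ` Rdot br smult B H C Bs)"

definition HR where
  "HR br smult B H = module.span smult (tvec B H ` roots br smult H)"

definition HR0 where
  "HR0 br smult B H = {h \<in> HR br smult B H. \<forall>h'\<in>HR br smult B H. B h h' = 0}"

end

theory Submission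
  imports Defs
begin

text \<open>The roots are the weights of the simultaneously diagonalisable action of H, and the
  nondegeneracy of B on H gives each root \<open>\<alpha>\<close> its vector \<open>t\<^sub>\<alpha>\<close>. For nonisotropic \<open>\<alpha>\<close>
  root vectors of \<open>\<plusminus>\<alpha>\<close> span an sl2 with locally nilpotent action, so the Cartan numbers
  \<open>2(\<beta>, \<alpha>)/(\<alpha>, \<alpha>)\<close> are integers. For isotropic \<open>\<delta>\<close>, root vectors of \<open>\<plusminus>\<delta>\<close> span a
  Heisenberg algebra instead, and the boundedness of the strings \<open>\<alpha> + k\<delta>\<close> shows that
  \<open>\<delta>\<close> is orthogonal to every root; hence \<open>t\<^sub>\<delta> \<in> H\<^sup>0(R)\<close>.

  Distinct classes are orthogonal and, by integrality, all pairings inside a class are real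
  multiples of one norm; with the independence of the base modulo \<open>V\<^sup>0\<close> this makes the
  form nondegenerate on each \<open>Hdot C\<close> and the sum direct. Finally, for \<open>\<gamma>\<close> in a class C,
  \<open>t\<^sub>\<gamma>\<close> is \<open>t\<close> of its base expansion, which lies in \<open>Hdot C\<close>, plus \<open>t\<close> of a residue in
  \<open>V\<^sup>0\<close>; peeling off base roots with positive Cartan number one at a time shows that
  this residue is an isotropic root, giving both the decomposition and
  \<open>H\<^sup>0(R) = span {t\<^sub>\<delta> | \<delta> \<in> R\<^sup>0}\<close>.\<close>

section \<open>Weights in Lie algebras\<close>

lemma exists_last_nonzero:
  fixes P :: "nat \<Rightarrow> 'a::zero"
  assumes "P 0 \<noteq> 0" and "P N = 0"
  shows "\<exists>n. P n \<noteq> 0 \<and> P (Suc n) = 0"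
  using assms(2)
proof (induction N)
  case 0
  with assms(1) show ?case by simp
next
  case (Suc N)
  then show ?case by (cases "P N = 0") auto
qed

lemma (in vector_space) span_image_explicit:
  assumes "finite S" and "x \<in> span (g ` S)"
  shows "\<exists>c. x = (\<Sum>\<beta>\<in>S. scale (c \<beta>) (g \<beta>))"
proof -
  let ?combs = "{x. \<exists>c. x = (\<Sum>\<beta>\<in>S. scale (c \<beta>) (g \<beta>))}"
  have "g \<beta> \<in> ?combs" if "\<beta> \<in> S" for \<beta>
    using assms(1) that
    by (intro CollectI exI[of _ "\<lambda>\<beta>'. if \<beta>' = \<beta> then 1 else 0"])
      (simp add: if_distrib[of "\<lambda>c. scale c _"] sum.delta cong: if_cong)
  moreover have "subspace ?combs"
  proof (rule subspaceI)
    show "0 \<in> ?combs" by (auto intro!: exI[of _ "\<lambda>_. 0"])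
  next
    fix x y assume "x \<in> ?combs" "y \<in> ?combs"
    then obtain c d where "x = (\<Sum>\<beta>\<in>S. scale (c \<beta>) (g \<beta>))" "y = (\<Sum>\<beta>\<in>S. scale (d \<beta>) (g \<beta>))"
      by blast
    then show "x + y \<in> ?combs"
      by (intro CollectI exI[of _ "\<lambda>\<beta>. c \<beta> + d \<beta>"]) (simp add: sum.distrib scale_left_distrib)
  next
    fix a x assume "x \<in> ?combs"
    then obtain c where "x = (\<Sum>\<beta>\<in>S. scale (c \<beta>) (g \<beta>))" by blast
    then show "scale a x \<in> ?combs"
      by (intro CollectI exI[of _ "\<lambda>\<beta>. a * c \<beta>"]) (simp add: scale_sum_right)
  qed
  ultimately show ?thesis using span_minimal[of "g ` S" ?combs] assms(2) by blast
qed

locale lie_alg =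
  fixes smult :: "complex \<Rightarrow> 'g::ab_group_add \<Rightarrow> 'g"
    and br :: "'g \<Rightarrow> 'g \<Rightarrow> 'g"
  assumes lie_algebra: "lie_algebra smult br"
begin

sublocale vector_space smult
  using lie_algebra by (simp add: lie_algebra_def)

lemma bracket_add_left: "br (x + y) z = br x z + br y z"
  and bracket_scale_left: "br (smult c x) y = smult c (br x y)"
  and bracket_add_right: "br x (y + z) = br x y + br x z"
  and bracket_scale_right: "br x (smult c y) = smult c (br x y)"
  and bracket_self: "br x x = 0"
  and jacobi: "br x (br y z) + br y (br z x) + br z (br x y) = 0"
  using lie_algebra by (simp_all add: lie_algebra_def)

interpretation bracket_left: additive "\<lambda>x. br x y" for y
  by standard (rule bracket_add_left)

interpretation bracket_right: additive "\<lambda>y. br x y" for x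
  by standard (rule bracket_add_right)

lemma bracket_zero_left [simp]: "br 0 x = 0"
  and bracket_zero_right [simp]: "br x 0 = 0"
  and bracket_minus_left: "br (- x) y = - br x y"
  and bracket_minus_right: "br x (- y) = - br x y"
  and bracket_diff_right: "br x (y - z) = br x y - br x z"
  and bracket_sum_right: "br x (sum f A) = (\<Sum>a\<in>A. br x (f a))"
  by (fact bracket_left.zero bracket_right.zero bracket_left.minus bracket_right.minus
      bracket_right.diff bracket_right.sum)+

lemma bracket_antisym: "br x y = - br y x"
proof -
  have "br (x + y) (x + y) = 0" by (rule bracket_self)
  then have "br x x + br x y + (br y x + br y y) = 0"
    by (simp add: bracket_add_left bracket_add_right algebra_simps)
  then have "br x y + br y x = 0" by (simp add: bracket_self)
  then show ?thesis by (simp add: eq_neg_iff_add_eq_0)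
qed

lemma bracket_leibniz: "br a (br b y) = br (br a b) y + br b (br a y)"
proof -
  have "br a (br b y) + br b (br y a) + br y (br a b) = 0" by (rule jacobi)
  then show ?thesis
    by (simp add: bracket_antisym[of y] bracket_antisym[of _ a] bracket_minus_right algebra_simps)
qed

lemma ad_pow_zero [simp]: "(br x ^^ j) 0 = 0"
  by (induction j) simp_all

lemma eigenvectors_sum_eq_0:
  assumes "finite L" and "\<And>l. l \<in> L \<Longrightarrow> br s (w l) = smult l (w l)" and "(\<Sum>l\<in>L. w l) = 0"
  shows "\<forall>l\<in>L. w l = 0"
  using assms
proof (induction L arbitrary: w rule: finite_induct)
  case empty
  then show ?case by simp
next
  case (insert l0 L)
  have sum0: "w l0 + (\<Sum>l\<in>L. w l) = 0" using insert by simp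
  have "br s (w l0 + (\<Sum>l\<in>L. w l)) - smult l0 (w l0 + (\<Sum>l\<in>L. w l)) = 0"
    by (simp only: sum0 bracket_zero_right scale_zero_right diff_self)
  then have "(\<Sum>l\<in>L. smult (l - l0) (w l)) = 0"
    using insert.prems(1)
    by (simp add: bracket_add_right bracket_sum_right scale_right_distrib scale_sum_right
        scale_left_diff_distrib sum_subtractf)
  moreover have "\<And>l. l \<in> L \<Longrightarrow> br s (smult (l - l0) (w l)) = smult l (smult (l - l0) (w l))"
    using insert.prems(1) by (simp add: bracket_scale_right scale_left_commute)
  ultimately have "\<forall>l\<in>L. smult (l - l0) (w l) = 0"
    using insert.IH[of "\<lambda>l. smult (l - l0) (w l)"] by blast
  then have "\<forall>l\<in>L. w l = 0" using insert.hyps(2) by auto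
  with sum0 show ?case by simp
qed

lemma ad_pow_eigenvector:
  assumes "br h a = smult c a" and "br h v = smult l v"
  shows "br h ((br a ^^ j) v) = smult (l + of_nat j * c) ((br a ^^ j) v)"
proof (induction j)
  case 0
  then show ?case using assms(2) by simp
next
  case (Suc j)
  have "br h ((br a ^^ Suc j) v) = br (br h a) ((br a ^^ j) v) + br a (br h ((br a ^^ j) v))"
    unfolding funpow.simps comp_def by (rule bracket_leibniz)
  also have "\<dots> = smult c ((br a ^^ Suc j) v) + smult (l + of_nat j * c) ((br a ^^ Suc j) v)"
    using assms(1) Suc by (simp add: bracket_scale_left bracket_scale_right)
  also have "\<dots> = smult (l + of_nat (Suc j) * c) ((br a ^^ Suc j) v)"
    by (simp add: algebra_simps flip: scale_left_distrib)
  finally show ?case .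
qed

text \<open>Along \<open>f^j v\<close> the weights drop by 2 and \<open>e f^(j+1) v = (j+1)(l-j) f^j v\<close>, so the
  last nonzero \<open>f^n v\<close> forces \<open>l = n\<close>.\<close>

lemma sl2_highest_weight_nat:
  assumes hf: "br (br e f) f = smult (-2) f" and f_nil: "\<forall>y. \<exists>n. (br f ^^ n) y = 0"
    and v: "v \<noteq> 0" "br (br e f) v = smult l v" "br e v = 0"
  shows "\<exists>n::nat. l = of_nat n"
proof -
  define F where "F j = (br f ^^ j) v" for j
  have F_Suc: "F (Suc j) = br f (F j)" for j by (simp add: F_def)
  have weight: "br (br e f) (F j) = smult (l - 2 * of_nat j) (F j)" for j
    using ad_pow_eigenvector[OF hf v(2), of j] by (simp add: F_def algebra_simps)
  have raise: "br e (F (Suc j)) = smult (of_nat (Suc j) * (l - of_nat j)) (F j)" for j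
  proof (induction j)
    case 0
    have "br e (F (Suc 0)) = br (br e f) (F 0) + br f (br e (F 0))"
      unfolding F_Suc by (rule bracket_leibniz)
    then show ?case using v by (simp add: F_def)
  next
    case (Suc j)
    have "br e (F (Suc (Suc j))) = br (br e f) (F (Suc j)) + br f (br e (F (Suc j)))"
      unfolding F_Suc[of "Suc j"] by (rule bracket_leibniz)
    also have "\<dots> = smult (l - 2 * of_nat (Suc j)) (F (Suc j))
        + smult (of_nat (Suc j) * (l - of_nat j)) (F (Suc j))"
      using weight[of "Suc j"] Suc F_Suc[of j] by (simp add: bracket_scale_right)
    also have "\<dots> = smult (of_nat (Suc (Suc j)) * (l - of_nat (Suc j))) (F (Suc j))"
      by (simp add: algebra_simps flip: scale_left_distrib)
    finally show ?case .
  qed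
  obtain N where "F N = 0" using f_nil by (auto simp: F_def)
  moreover have "F 0 \<noteq> 0" using v by (simp add: F_def)
  ultimately obtain n where n: "F n \<noteq> 0" "F (Suc n) = 0" using exists_last_nonzero by metis
  have "smult (of_nat (Suc n) * (l - of_nat n)) (F n) = 0" using raise[of n] n(2) by simp
  then have "l = of_nat n" using n(1) by (simp del: of_nat_Suc)
  then show ?thesis by blast
qed

lemma sl2_weight_int:
  assumes he: "br (br e f) e = smult 2 e" and hf: "br (br e f) f = smult (-2) f"
    and e_nil: "\<forall>y. \<exists>n. (br e ^^ n) y = 0" and f_nil: "\<forall>y. \<exists>n. (br f ^^ n) y = 0"
    and x: "x \<noteq> 0" "br (br e f) x = smult m x"
  shows "\<exists>k::int. m = of_int k"
proof -
  define E where "E j = (br e ^^ j) x" for j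
  have E_Suc: "E (Suc j) = br e (E j)" for j by (simp add: E_def)
  have weight: "br (br e f) (E j) = smult (m + 2 * of_nat j) (E j)" for j
    using ad_pow_eigenvector[OF he x(2), of j] by (simp add: E_def algebra_simps)
  obtain N where "E N = 0" using e_nil by (auto simp: E_def)
  moreover have "E 0 \<noteq> 0" using x by (simp add: E_def)
  ultimately obtain p where p: "E p \<noteq> 0" "E (Suc p) = 0" using exists_last_nonzero by metis
  obtain n :: nat where "m + 2 * of_nat p = of_nat n"
    using sl2_highest_weight_nat[OF hf f_nil p(1) weight[of p]] p(2) E_Suc by auto
  then have "m = of_int (int n - 2 * int p)" by (simp add: algebra_simps)
  then show ?thesis by blast
qed

lemma sl2_lowest_weight:
  assumes he: "br (br e f) e = smult 2 e" and e_nil: "\<forall>y. \<exists>n. (br e ^^ n) y = 0"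
    and x: "x \<noteq> 0" "br (br e f) x = smult m x" "br f x = 0"
  shows "\<exists>n::nat. m = - of_nat n"
proof -
  have "br (br f e) e = smult (-2) e" "br (br f e) x = smult (- m) x"
    using he x by (simp_all add: bracket_antisym[of f] bracket_minus_left)
  then obtain n :: nat where "- m = of_nat n"
    using sl2_highest_weight_nat[OF _ e_nil x(1) _ x(3)] by blast
  then have "m = - of_nat n" by (metis minus_minus)
  then show ?thesis by blast
qed

lemma heisenberg_commutator:
  assumes "\<And>j. br (br x y) ((br x ^^ j) m) = smult d ((br x ^^ j) m)"
  shows "(br x ^^ Suc j) (br y m) = br y ((br x ^^ Suc j) m) + smult (of_nat (Suc j) * d) ((br x ^^ j) m)"
proof (induction j)
  case 0
  have "br x (br y m) = br (br x y) m + br y (br x m)" by (rule bracket_leibniz)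
  then show ?case using assms[of 0] by (simp add: add.commute)
next
  case (Suc j)
  let ?X = "br x ^^ Suc j"
  have "(br x ^^ Suc (Suc j)) (br y m) = br x (br y (?X m)) + smult (of_nat (Suc j) * d) (?X m)"
    using Suc by (simp add: bracket_add_right bracket_scale_right)
  also have "br x (br y (?X m)) = br (br x y) (?X m) + br y (br x (?X m))" by (rule bracket_leibniz)
  also have "br (br x y) (?X m) = smult d (?X m)" by (rule assms)
  finally show ?case
    by (simp add: algebra_simps flip: scale_left_distrib)
qed

text \<open>That is, a Heisenberg algebra whose centre acts by \<open>d \<noteq> 0\<close> has no nonzero module on
  which x acts nilpotently: \<open>x^N M = 0\<close> descends to \<open>x^(N-1) M = 0\<close> by the commutator formula.\<close>

lemma heisenberg_nilpotent_action_zero: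
  assumes d: "d \<noteq> 0"
    and closed: "\<And>m. m \<in> M \<Longrightarrow> br y m \<in> M"
    and central: "\<And>m j. m \<in> M \<Longrightarrow> br (br x y) ((br x ^^ j) m) = smult d ((br x ^^ j) m)"
  shows "(\<And>m. m \<in> M \<Longrightarrow> (br x ^^ N) m = 0) \<Longrightarrow> m \<in> M \<Longrightarrow> m = 0"
proof (induction N arbitrary: m)
  case 0
  then show ?case by simp
next
  case (Suc N)
  have "(br x ^^ N) m = 0" if m: "m \<in> M" for m
  proof -
    have "smult (of_nat (Suc N) * d) ((br x ^^ N) m) = 0"
      using heisenberg_commutator[OF central[OF m], of N] Suc.prems(1)[OF m]
        Suc.prems(1)[OF closed[OF m]] by simp
    then show ?thesis using d by (simp del: of_nat_Suc)
  qed
  then show ?case using Suc by blast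
qed

end

section \<open>Weight space decomposition\<close>

locale grla =
  fixes smult :: "complex \<Rightarrow> 'g::ab_group_add \<Rightarrow> 'g"
    and br :: "'g \<Rightarrow> 'g \<Rightarrow> 'g"
    and B :: "'g \<Rightarrow> 'g \<Rightarrow> complex"
    and H :: "'g set"
  assumes grla: "GRLA smult br B H"
begin

sublocale lie_alg smult br
  using grla by unfold_locales (simp add: GRLA_def)

lemma form_add_left: "B (x + y) z = B x z + B y z"
  and form_scale_left: "B (smult c x) y = c * B x y"
  and form_sym: "B x y = B y x"
  and form_invariant: "B (br x y) z = B x (br y z)"
  and H_subspace: "subspace H"
  and H_abelian: "x \<in> H \<Longrightarrow> y \<in> H \<Longrightarrow> br x y = 0"
  and H_finite_dim: "\<exists>S. finite S \<and> H = span S"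
  and H_self_centralizing: "{x. \<forall>h\<in>H. br h x = 0} = H"
  and ad_H_diagonalizable: "h \<in> H \<Longrightarrow> span {x. \<exists>c. br h x = smult c x} = UNIV"
  and nonisotropic_root_vector_nilpotent: "\<alpha> \<in> nonisotropic_roots br smult B H \<Longrightarrow>
      x \<in> root_space br smult H \<alpha> \<Longrightarrow> \<exists>n. (br x ^^ n) y = 0"
  using grla by (auto simp: GRLA_def)

lemma form_nondegenerate: "(\<And>y. B x y = 0) \<Longrightarrow> x = 0"
  using grla by (simp add: GRLA_def)

interpretation form_left: additive "\<lambda>x. B x y" for y
  by standard (rule form_add_left)

lemma form_zero_left [simp]: "B 0 x = 0"
  and form_zero_right [simp]: "B x 0 = 0"
  and form_add_right: "B x (y + z) = B x y + B x z"
  and form_scale_right: "B x (smult c y) = c * B x y"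
  and form_minus_left: "B (- x) y = - B x y"
  and form_minus_right: "B x (- y) = - B x y"
  and form_diff_left: "B (x - y) z = B x z - B y z"
  and form_sum_left: "B (sum f A) y = (\<Sum>a\<in>A. B (f a) y)"
  by (simp_all add: form_left.zero form_left.minus form_left.diff form_left.sum
      form_sym[of x] form_add_left form_scale_left)

lemma form_bracket_skew: "B (br h x) y = - B x (br h y)"
  by (metis form_invariant form_minus_left bracket_antisym)

lemma orthogonal_subspace: "subspace {y. B x y = 0}"
  by (rule subspaceI) (auto simp: form_add_right form_scale_right)

abbreviation weight_space :: "('g \<Rightarrow> complex) \<Rightarrow> 'g set"
  where "weight_space \<mu> \<equiv> root_space br smult H \<mu>"

lemma mem_weight_space_iff: "x \<in> weight_space \<mu> \<longleftrightarrow> (\<forall>h\<in>H. br h x = smult (\<mu> h) x)"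
  by (simp add: root_space_def)

lemma weight_space_subspace: "subspace (weight_space \<mu>)"
  by (rule subspaceI)
    (auto simp: mem_weight_space_iff bracket_add_right bracket_scale_right scale_right_distrib
      scale_left_commute)

lemma zero_in_weight_space [simp]: "0 \<in> weight_space \<mu>"
  by (simp add: mem_weight_space_iff)

lemma weight_space_scale: "x \<in> weight_space \<mu> \<Longrightarrow> smult c x \<in> weight_space \<mu>"
  by (rule subspace_scale[OF weight_space_subspace])

lemma weight_space_zero: "weight_space (\<lambda>_. 0) = H"
  using H_self_centralizing by (simp add: root_space_def)

lemma bracket_weight_spaces:
  assumes "x \<in> weight_space \<alpha>" "y \<in> weight_space \<beta>"
  shows "br x y \<in> weight_space (\<lambda>h. \<alpha> h + \<beta> h)"
  unfolding mem_weight_space_iff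
proof
  fix h assume h: "h \<in> H"
  have "br h (br x y) = br (br h x) y + br x (br h y)" by (rule bracket_leibniz)
  also have "\<dots> = smult (\<alpha> h + \<beta> h) (br x y)"
    using assms h by (simp add: mem_weight_space_iff bracket_scale_left bracket_scale_right
        scale_left_distrib)
  finally show "br h (br x y) = smult (\<alpha> h + \<beta> h) (br x y)" .
qed

lemma form_weight_spaces_orthogonal:
  assumes "x \<in> weight_space \<alpha>" "y \<in> weight_space \<beta>" "h \<in> H" "\<alpha> h + \<beta> h \<noteq> 0"
  shows "B x y = 0"
proof -
  have "\<alpha> h * B x y = - (\<beta> h * B x y)"
    using form_bracket_skew[of h x y] assms by (simp add: mem_weight_space_iff form_scale_left
        form_scale_right)
  then have "(\<alpha> h + \<beta> h) * B x y = 0" by (simp add: algebra_simps)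
  then show ?thesis using assms(4) by simp
qed

definition common_eigenvectors :: "'g set \<Rightarrow> 'g set"
  where "common_eigenvectors S = {x. \<forall>s\<in>S. \<exists>c. br s x = smult c x}"

lemma ad_eigendecomposition:
  assumes "s \<in> H"
  obtains L w where "finite L" "\<And>l. br s (w l) = smult l (w l)" "v = (\<Sum>l\<in>L. w l)"
proof -
  have "v \<in> span {x. \<exists>c. br s x = smult c x}" using ad_H_diagonalizable[OF assms] by simp
  then obtain U r where U: "finite U" "U \<subseteq> {x. \<exists>c. br s x = smult c x}"
    and v: "v = (\<Sum>u\<in>U. smult (r u) u)"
    unfolding span_explicit by blast
  define ev where "ev u = (SOME c. br s u = smult c u)" for u
  have ev: "u \<in> U \<Longrightarrow> br s u = smult (ev u) u" for u
    unfolding ev_def using U(2) by (auto intro: someI_ex)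
  define w where "w l = (\<Sum>u\<in>{u\<in>U. ev u = l}. smult (r u) u)" for l
  show ?thesis
  proof
    show "finite (ev ` U)" using U(1) by simp
    show "br s (w l) = smult l (w l)" for l
      unfolding w_def by (auto simp: bracket_sum_right bracket_scale_right ev scale_sum_right
          scale_left_commute intro!: sum.cong)
    show "v = (\<Sum>l\<in>ev ` U. w l)"
      unfolding v w_def using U(1) by (rule sum.image_gen)
  qed
qed

text \<open>Since H is abelian, ad s' commutes with ad s, so it preserves the eigencomponents.\<close>

lemma eigencomponents_common_eigenvectors:
  assumes s: "s \<in> H" and S: "S \<subseteq> H" and v: "v \<in> common_eigenvectors S"
    and L: "finite L" "\<And>l. br s (w l) = smult l (w l)" "v = (\<Sum>l\<in>L. w l)" and l: "l \<in> L"
  shows "w l \<in> common_eigenvectors S"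
  unfolding common_eigenvectors_def mem_Collect_eq
proof
  fix s' assume s': "s' \<in> S"
  then obtain c where c: "br s' v = smult c v" using v unfolding common_eigenvectors_def by blast
  define u where "u l = br s' (w l) - smult c (w l)" for l
  have "(\<Sum>l\<in>L. u l) = br s' v - smult c v"
    by (simp add: u_def L(3) bracket_sum_right scale_sum_right sum_subtractf)
  then have "(\<Sum>l\<in>L. u l) = 0" using c by simp
  moreover have "br s (u l) = smult l (u l)" for l
  proof -
    have "br s (br s' (w l)) = br s' (br s (w l))"
      using bracket_leibniz[of s s' "w l"] H_abelian s s' S by auto
    then show ?thesis
      using L(2) by (simp add: u_def bracket_diff_right bracket_scale_right scale_right_diff_distrib
          scale_left_commute)
  qed
  ultimately have "u l = 0" using eigenvectors_sum_eq_0[OF L(1)] l by blast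
  then show "\<exists>c. br s' (w l) = smult c (w l)" by (auto simp: u_def)
qed

lemma span_common_eigenvectors_finite:
  "finite S \<Longrightarrow> S \<subseteq> H \<Longrightarrow> span (common_eigenvectors S) = UNIV"
proof (induction S rule: finite_induct)
  case empty
  then show ?case by (simp add: common_eigenvectors_def)
next
  case (insert s S)
  have "v \<in> span (common_eigenvectors (insert s S))" if v: "v \<in> common_eigenvectors S" for v
  proof -
    obtain L w where L: "finite L" "\<And>l. br s (w l) = smult l (w l)" "v = (\<Sum>l\<in>L. w l)"
      using ad_eigendecomposition insert.prems by blast
    have "w l \<in> common_eigenvectors (insert s S)" if "l \<in> L" for l
      using eigencomponents_common_eigenvectors[OF _ _ v L that] L(2) insert.prems
      by (auto simp: common_eigenvectors_def)
    then show ?thesis unfolding L(3) by (intro span_sum span_base)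
  qed
  then have "span (common_eigenvectors S) \<subseteq> span (common_eigenvectors (insert s S))"
    by (intro span_minimal) auto
  then show ?case using insert by auto
qed

lemma eigenvector_operators_subspace: "subspace {h. \<exists>c. br h x = smult c x}"
proof (rule subspaceI)
  show "0 \<in> {h. \<exists>c. br h x = smult c x}" by (auto intro: exI[of _ 0])
next
  fix h h' assume "h \<in> {h. \<exists>c. br h x = smult c x}" "h' \<in> {h. \<exists>c. br h x = smult c x}"
  then show "h + h' \<in> {h. \<exists>c. br h x = smult c x}"
    by (auto simp: bracket_add_left scale_left_distrib[symmetric])
next
  fix c h assume "h \<in> {h. \<exists>c. br h x = smult c x}"
  then show "smult c h \<in> {h. \<exists>c. br h x = smult c x}"
    by (auto simp: bracket_scale_left)
qed

lemma span_common_eigenvectors_H: "span (common_eigenvectors H) = UNIV"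
proof -
  obtain S where S: "finite S" "H = span S" using H_finite_dim by blast
  have "common_eigenvectors S \<subseteq> common_eigenvectors H"
  proof
    fix x assume x: "x \<in> common_eigenvectors S"
    have "span S \<subseteq> {h. \<exists>c. br h x = smult c x}"
      using x by (intro span_minimal eigenvector_operators_subspace)
        (auto simp: common_eigenvectors_def)
    then show "x \<in> common_eigenvectors H" using S by (auto simp: common_eigenvectors_def)
  qed
  then have "span (common_eigenvectors S) \<subseteq> span (common_eigenvectors H)" by (rule span_mono)
  then show ?thesis using span_common_eigenvectors_finite[OF S(1)] S span_superset by auto
qed

definition weight_vectors :: "'g set"
  where "weight_vectors = {x. \<exists>\<mu>. dual_of smult H \<mu> \<and> x \<in> weight_space \<mu>}"

lemma common_eigenvector_weight_vector:
  assumes x: "x \<in> common_eigenvectors H"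
  shows "x \<in> weight_vectors"
proof (cases "x = 0")
  case True
  then show ?thesis
    unfolding weight_vectors_def by (intro CollectI exI[of _ "\<lambda>_. 0"]) (simp add: dual_of_def)
next
  case False
  define \<mu> where "\<mu> h = (if h \<in> H then SOME c. br h x = smult c x else 0)" for h
  have weight: "h \<in> H \<Longrightarrow> br h x = smult (\<mu> h) x" for h
    unfolding \<mu>_def using x by (auto simp: common_eigenvectors_def intro: someI_ex)
  have "dual_of smult H \<mu>"
    unfolding dual_of_def
  proof (intro conjI ballI allI impI)
    fix h h' assume h: "h \<in> H" "h' \<in> H"
    have "smult (\<mu> (h + h')) x = br (h + h') x"
      using weight subspace_add[OF H_subspace h] by simp
    also have "\<dots> = smult (\<mu> h + \<mu> h') x"
      using h by (simp add: weight bracket_add_left scale_left_distrib)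
    finally show "\<mu> (h + h') = \<mu> h + \<mu> h'" using False by simp
  next
    fix c h assume h: "h \<in> H"
    have "smult (\<mu> (smult c h)) x = br (smult c h) x"
      using weight subspace_scale[OF H_subspace h] by simp
    also have "\<dots> = smult (c * \<mu> h) x"
      using h by (simp add: weight bracket_scale_left)
    finally show "\<mu> (smult c h) = c * \<mu> h" using False by simp
  next
    fix h assume "h \<notin> H"
    then show "\<mu> h = 0" by (simp add: \<mu>_def)
  qed
  with weight show ?thesis by (auto simp: weight_vectors_def mem_weight_space_iff)
qed

lemma orthogonal_weight_vectors_eq_0:
  assumes "\<And>y. y \<in> weight_vectors \<Longrightarrow> B x y = 0"
  shows "x = 0"
proof (rule form_nondegenerate)
  fix y
  have "span weight_vectors \<subseteq> {y. B x y = 0}"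
    using assms by (intro span_minimal orthogonal_subspace) auto
  moreover have "span weight_vectors = UNIV"
    using span_common_eigenvectors_H span_mono[of "common_eigenvectors H" weight_vectors]
      common_eigenvector_weight_vector by blast
  ultimately show "B x y = 0" by blast
qed

lemma dual_of_eqI:
  assumes "dual_of smult H f" "dual_of smult H g" "\<And>h. h \<in> H \<Longrightarrow> f h = g h"
  shows "f = g"
proof
  fix x
  show "f x = g x" using assms by (cases "x \<in> H") (auto simp: dual_of_def)
qed

lemma dual_of_uminus: "dual_of smult H f \<Longrightarrow> dual_of smult H (\<lambda>h. - f h)"
  and dual_of_add: "dual_of smult H f \<Longrightarrow> dual_of smult H g \<Longrightarrow> dual_of smult H (\<lambda>h. f h + g h)"
  and dual_of_diff: "dual_of smult H f \<Longrightarrow> dual_of smult H g \<Longrightarrow> dual_of smult H (\<lambda>h. f h - g h)"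
  and dual_of_scale: "dual_of smult H f \<Longrightarrow> dual_of smult H (\<lambda>h. c * f h)"
  unfolding dual_of_def by (auto simp: algebra_simps)

lemma form_nondegenerate_on_H:
  assumes h: "h \<in> H" and orth: "\<And>k. k \<in> H \<Longrightarrow> B h k = 0"
  shows "h = 0"
proof (rule orthogonal_weight_vectors_eq_0)
  fix y assume "y \<in> weight_vectors"
  then obtain \<mu> where \<mu>: "dual_of smult H \<mu>" "y \<in> weight_space \<mu>"
    unfolding weight_vectors_def by blast
  show "B h y = 0"
  proof (cases "\<exists>k\<in>H. \<mu> k \<noteq> 0")
    case True
    then obtain k where k: "k \<in> H" "\<mu> k \<noteq> 0" by blast
    have "h \<in> weight_space (\<lambda>_. 0)" using h weight_space_zero by simp
    then show ?thesis using form_weight_spaces_orthogonal[OF _ \<mu>(2) k(1)] k(2) by simp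
  next
    case False
    then have "y \<in> weight_space (\<lambda>_. 0)" using \<mu>(2) by (simp add: mem_weight_space_iff)
    then show ?thesis using orth weight_space_zero by simp
  qed
qed

lemma weight_space_pairing:
  assumes \<mu>: "dual_of smult H \<mu>" and x: "x \<in> weight_space \<mu>" "x \<noteq> 0"
  shows "\<exists>y\<in>weight_space (\<lambda>h. - \<mu> h). B x y \<noteq> 0"
proof (rule ccontr)
  assume "\<not> ?thesis"
  then have orth: "\<And>y. y \<in> weight_space (\<lambda>h. - \<mu> h) \<Longrightarrow> B x y = 0" by blast
  have "x = 0"
  proof (rule orthogonal_weight_vectors_eq_0)
    fix y assume "y \<in> weight_vectors"
    then obtain \<nu> where \<nu>: "dual_of smult H \<nu>" "y \<in> weight_space \<nu>"
      unfolding weight_vectors_def by blast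
    show "B x y = 0"
    proof (cases "\<exists>k\<in>H. \<mu> k + \<nu> k \<noteq> 0")
      case True
      then show ?thesis using form_weight_spaces_orthogonal[OF x(1) \<nu>(2)] by blast
    next
      case False
      then have "\<nu> = (\<lambda>h. - \<mu> h)"
        by (intro dual_of_eqI[OF \<nu>(1) dual_of_uminus[OF \<mu>]]) (simp add: eq_neg_iff_add_eq_0 add.commute)
      then show ?thesis using orth \<nu>(2) by simp
    qed
  qed
  with x(2) show False ..
qed

abbreviation R where "R \<equiv> roots br smult H"
abbreviation R\<^sub>x where "R\<^sub>x \<equiv> nonisotropic_roots br smult B H"
abbreviation R\<^sub>0 where "R\<^sub>0 \<equiv> isotropic_roots br smult B H"

lemma mem_roots_iff: "\<alpha> \<in> R \<longleftrightarrow> dual_of smult H \<alpha> \<and> (\<exists>x\<in>weight_space \<alpha>. x \<noteq> 0)"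
  using zero_in_weight_space[of \<alpha>] unfolding roots_def by blast

lemma roots_uminus:
  assumes "\<alpha> \<in> R"
  shows "(\<lambda>h. - \<alpha> h) \<in> R"
proof -
  from assms obtain x where x: "x \<in> weight_space \<alpha>" "x \<noteq> 0" and \<alpha>: "dual_of smult H \<alpha>"
    by (auto simp: mem_roots_iff)
  obtain y where "y \<in> weight_space (\<lambda>h. - \<alpha> h)" "B x y \<noteq> 0"
    using weight_space_pairing[OF \<alpha> x] by blast
  then have "y \<in> weight_space (\<lambda>h. - \<alpha> h)" "y \<noteq> 0" by auto
  then show ?thesis using dual_of_uminus[OF \<alpha>] by (auto simp: mem_roots_iff)
qed

section \<open>The vectors \<open>t\<^sub>\<alpha>\<close>\<close>

text \<open>\<open>tvec B H f\<close> is a definite description, so it is meaningful only for functionals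
  represented by an element of H; this covers the roots and all their combinations.\<close>

definition representable :: "('g \<Rightarrow> complex) \<Rightarrow> bool"
  where "representable f \<longleftrightarrow> (\<exists>t\<in>H. \<forall>h\<in>H. B t h = f h)"

abbreviation tv :: "('g \<Rightarrow> complex) \<Rightarrow> 'g"
  where "tv \<alpha> \<equiv> tvec B H \<alpha>"

abbreviation rpair :: "('g \<Rightarrow> complex) \<Rightarrow> ('g \<Rightarrow> complex) \<Rightarrow> complex" (\<open>\<langle>_, _\<rangle>\<close>)
  where "\<langle>\<alpha>, \<beta>\<rangle> \<equiv> rform B H \<alpha> \<beta>"

lemma tvec_eqI:
  assumes "t \<in> H" "\<And>h. h \<in> H \<Longrightarrow> B t h = f h"
  shows "tv f = t"
  unfolding tvec_def
proof (rule the_equality)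
  show "t \<in> H \<and> (\<forall>h\<in>H. B t h = f h)" using assms by blast
  fix t' assume t': "t' \<in> H \<and> (\<forall>h\<in>H. B t' h = f h)"
  have "t' - t = 0"
    by (rule form_nondegenerate_on_H)
      (use t' assms in \<open>auto simp: subspace_diff[OF H_subspace] form_diff_left\<close>)
  then show "t' = t" by simp
qed

lemma representable_tvec:
  assumes "t \<in> H" "\<And>h. h \<in> H \<Longrightarrow> B t h = f h"
  shows "representable f \<and> tv f = t"
  using assms tvec_eqI unfolding representable_def by blast

lemma tvec_in_H: "representable f \<Longrightarrow> tv f \<in> H"
  and form_tvec: "representable f \<Longrightarrow> h \<in> H \<Longrightarrow> B (tv f) h = f h"
  using tvec_eqI unfolding representable_def by metis+

lemma representable_zero [simp]: "representable (\<lambda>x. 0)" and tvec_zero [simp]: "tv (\<lambda>x. 0) = 0"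
  using representable_tvec[of 0 "\<lambda>x. 0"] subspace_0[OF H_subspace] by auto

context
  fixes f g :: "'g \<Rightarrow> complex"
  assumes f: "representable f" and g: "representable g"
begin

lemma representable_add [simp]: "representable (\<lambda>x. f x + g x)"
  and tvec_add: "tv (\<lambda>x. f x + g x) = tv f + tv g"
  using representable_tvec[of "tv f + tv g" "\<lambda>x. f x + g x"] f g
  by (auto simp: tvec_in_H form_tvec subspace_add[OF H_subspace] form_add_left)

lemma representable_diff [simp]: "representable (\<lambda>x. f x - g x)"
  and tvec_diff: "tv (\<lambda>x. f x - g x) = tv f - tv g"
  using representable_tvec[of "tv f - tv g" "\<lambda>x. f x - g x"] f g
  by (auto simp: tvec_in_H form_tvec subspace_diff[OF H_subspace] form_diff_left)

end

lemma representable_scale [simp]: "representable f \<Longrightarrow> representable (\<lambda>x. c * f x)"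
  and tvec_scale: "representable f \<Longrightarrow> tv (\<lambda>x. c * f x) = smult c (tv f)"
  using representable_tvec[of "smult c (tv f)" "\<lambda>x. c * f x"]
  by (auto simp: tvec_in_H form_tvec subspace_scale[OF H_subspace] form_scale_left)

lemma representable_uminus [simp]: "representable f \<Longrightarrow> representable (\<lambda>x. - f x)"
  and tvec_uminus: "representable f \<Longrightarrow> tv (\<lambda>x. - f x) = - tv f"
  using representable_tvec[of "- tv f" "\<lambda>x. - f x"]
  by (auto simp: tvec_in_H form_tvec subspace_neg[OF H_subspace] form_minus_left)

lemma
  assumes "finite A" "\<And>i. i \<in> A \<Longrightarrow> representable i"
  shows representable_rcomb [simp]: "representable (rcomb c A)"
    and tvec_rcomb: "tv (rcomb c A) = (\<Sum>i\<in>A. smult (of_real (c i)) (tv i))"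
proof -
  have "representable (rcomb c A) \<and> tv (rcomb c A) = (\<Sum>i\<in>A. smult (of_real (c i)) (tv i))"
    using assms
  proof (induction A rule: finite_induct)
    case (insert a A)
    have "rcomb c (insert a A) = (\<lambda>x. of_real (c a) * a x + rcomb c A x)"
      using insert.hyps by (simp add: rcomb_def)
    then show ?case using insert by (simp add: tvec_add tvec_scale)
  qed (simp add: rcomb_def)
  then show "representable (rcomb c A)" "tv (rcomb c A) = (\<Sum>i\<in>A. smult (of_real (c i)) (tv i))"
    by simp_all
qed

lemma rform_eval: "representable f \<Longrightarrow> representable g \<Longrightarrow> \<langle>f, g\<rangle> = g (tv f)"
  by (simp add: rform_def form_tvec tvec_in_H form_sym[of "tv f"])

lemma rform_sym: "\<langle>f, g\<rangle> = \<langle>g, f\<rangle>"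
  by (simp add: rform_def form_sym)

context
  fixes f g u :: "'g \<Rightarrow> complex"
  assumes f: "representable f" and g: "representable g"
begin

lemma rform_add_left: "\<langle>\<lambda>x. f x + g x, u\<rangle> = \<langle>f, u\<rangle> + \<langle>g, u\<rangle>"
  and rform_diff_left: "\<langle>\<lambda>x. f x - g x, u\<rangle> = \<langle>f, u\<rangle> - \<langle>g, u\<rangle>"
  and rform_add_right: "\<langle>u, \<lambda>x. f x + g x\<rangle> = \<langle>u, f\<rangle> + \<langle>u, g\<rangle>"
  and rform_diff_right: "\<langle>u, \<lambda>x. f x - g x\<rangle> = \<langle>u, f\<rangle> - \<langle>u, g\<rangle>"
  using f g by (simp_all add: rform_def tvec_add tvec_diff form_add_left form_diff_left
      form_add_right form_sym[of "tv u"])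

end

lemma rform_uminus_left: "representable f \<Longrightarrow> \<langle>\<lambda>x. - f x, g\<rangle> = - \<langle>f, g\<rangle>"
  and rform_uminus_right: "representable g \<Longrightarrow> \<langle>f, \<lambda>x. - g x\<rangle> = - \<langle>f, g\<rangle>"
  by (simp_all add: rform_def tvec_uminus form_minus_left form_minus_right)

lemma rform_scale_left: "representable f \<Longrightarrow> \<langle>\<lambda>x. c * f x, g\<rangle> = c * \<langle>f, g\<rangle>"
  and rform_scale_right: "representable g \<Longrightarrow> \<langle>f, \<lambda>x. c * g x\<rangle> = c * \<langle>f, g\<rangle>"
  by (simp_all add: rform_def tvec_scale form_scale_left form_scale_right)

lemma rform_rcomb_left:
  assumes "finite A" "\<And>i. i \<in> A \<Longrightarrow> representable i"
  shows "\<langle>rcomb c A, g\<rangle> = (\<Sum>i\<in>A. of_real (c i) * \<langle>i, g\<rangle>)"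
  using assms by (simp add: rform_def tvec_rcomb form_sum_left form_scale_left)

lemma rform_rcomb_right:
  assumes "finite A" "\<And>i. i \<in> A \<Longrightarrow> representable i"
  shows "\<langle>g, rcomb c A\<rangle> = (\<Sum>i\<in>A. of_real (c i) * \<langle>g, i\<rangle>)"
  using rform_rcomb_left[OF assms] by (simp add: rform_sym)

lemma bracket_opposite_weights:
  assumes x: "x \<in> weight_space \<alpha>" and y: "y \<in> weight_space (\<lambda>h. - \<alpha> h)"
  shows "br x y \<in> H" and "h \<in> H \<Longrightarrow> B (br x y) h = \<alpha> h * B x y"
proof -
  show "br x y \<in> H" using bracket_weight_spaces[OF x y] weight_space_zero by simp
  assume h: "h \<in> H"
  have "B (br x y) h = - B x (br h y)"
    by (simp add: form_invariant bracket_antisym[of y h] form_minus_right)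
  also have "\<dots> = \<alpha> h * B x y"
    using y h by (simp add: mem_weight_space_iff form_scale_right form_minus_right)
  finally show "B (br x y) h = \<alpha> h * B x y" .
qed

lemma roots_representable: "\<alpha> \<in> R \<Longrightarrow> representable \<alpha>"
proof -
  assume "\<alpha> \<in> R"
  then obtain x where x: "x \<in> weight_space \<alpha>" "x \<noteq> 0" and \<alpha>: "dual_of smult H \<alpha>"
    by (auto simp: mem_roots_iff)
  obtain y where y: "y \<in> weight_space (\<lambda>h. - \<alpha> h)" "B x y \<noteq> 0"
    using weight_space_pairing[OF \<alpha> x] by blast
  show "representable \<alpha>"
    unfolding representable_def
    using bracket_opposite_weights[OF x(1) y(1)] y(2) subspace_scale[OF H_subspace]
    by (intro bexI[of _ "smult (1 / B x y) (br x y)"]) (auto simp: form_scale_left)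
qed

lemma bracket_opposite_root_vectors:
  assumes \<alpha>: "\<alpha> \<in> R" and x: "x \<in> weight_space \<alpha>" and y: "y \<in> weight_space (\<lambda>h. - \<alpha> h)"
  shows "br x y = smult (B x y) (tv \<alpha>)"
proof -
  have "br x y - smult (B x y) (tv \<alpha>) = 0"
    using bracket_opposite_weights[OF x y] roots_representable[OF \<alpha>]
    by (intro form_nondegenerate_on_H)
      (simp_all add: subspace_diff[OF H_subspace] subspace_scale[OF H_subspace] tvec_in_H
        form_tvec form_diff_left form_scale_left)
  then show ?thesis by simp
qed

section \<open>Cartan numbers\<close>

lemma nonisotropic_roots_iff: "\<alpha> \<in> R\<^sub>x \<longleftrightarrow> \<alpha> \<in> R \<and> \<langle>\<alpha>, \<alpha>\<rangle> \<noteq> 0"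
  by (simp add: nonisotropic_roots_def)

lemma isotropic_roots_iff: "\<alpha> \<in> R\<^sub>0 \<longleftrightarrow> \<alpha> \<in> R \<and> \<langle>\<alpha>, \<alpha>\<rangle> = 0"
  by (auto simp: isotropic_roots_def nonisotropic_roots_def)

lemma nonisotropic_roots_uminus:
  assumes "\<alpha> \<in> R\<^sub>x"
  shows "(\<lambda>h. - \<alpha> h) \<in> R\<^sub>x"
  using assms roots_uminus roots_representable
  by (simp add: nonisotropic_roots_iff rform_uminus_left rform_uminus_right)

definition cartan :: "('g \<Rightarrow> complex) \<Rightarrow> ('g \<Rightarrow> complex) \<Rightarrow> complex"
  where "cartan \<beta> \<alpha> = 2 * \<langle>\<beta>, \<alpha>\<rangle> / \<langle>\<alpha>, \<alpha>\<rangle>"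

lemma root_vectors_bracket_tvec:
  assumes \<delta>: "\<delta> \<in> R"
  obtains x y where "x \<in> weight_space \<delta>" "y \<in> weight_space (\<lambda>h. - \<delta> h)" "br x y = tv \<delta>"
proof -
  obtain x where x: "x \<in> weight_space \<delta>" "x \<noteq> 0" and dual\<delta>: "dual_of smult H \<delta>"
    using \<delta> by (auto simp: mem_roots_iff)
  obtain y where y: "y \<in> weight_space (\<lambda>h. - \<delta> h)" "B x y \<noteq> 0"
    using weight_space_pairing[OF dual\<delta> x] by blast
  have "br x (smult (1 / B x y) y) = tv \<delta>"
    using bracket_opposite_root_vectors[OF \<delta> x(1) weight_space_scale[OF y(1)]] y(2)
    by (simp add: form_scale_right)
  then show ?thesis using that x(1) weight_space_scale[OF y(1)] by blast
qed

lemma sl2_triple: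
  assumes \<alpha>: "\<alpha> \<in> R\<^sub>x"
  obtains e f where "e \<in> weight_space \<alpha>" "f \<in> weight_space (\<lambda>h. - \<alpha> h)"
    "br (br e f) e = smult 2 e" "br (br e f) f = smult (-2) f"
    "\<forall>y. \<exists>n. (br e ^^ n) y = 0" "\<forall>y. \<exists>n. (br f ^^ n) y = 0"
    "\<And>\<beta> x. \<beta> \<in> R \<Longrightarrow> x \<in> weight_space \<beta> \<Longrightarrow> br (br e f) x = smult (cartan \<beta> \<alpha>) x"
proof -
  have \<alpha>R: "\<alpha> \<in> R" and \<alpha>\<alpha>: "\<langle>\<alpha>, \<alpha>\<rangle> \<noteq> 0" using \<alpha> by (auto simp: nonisotropic_roots_iff)
  have rep\<alpha>: "representable \<alpha>" using roots_representable[OF \<alpha>R] .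
  obtain e f0 where e: "e \<in> weight_space \<alpha>" and f0: "f0 \<in> weight_space (\<lambda>h. - \<alpha> h)"
    and ef0: "br e f0 = tv \<alpha>"
    using root_vectors_bracket_tvec[OF \<alpha>R] by blast
  define f where "f = smult (2 / \<langle>\<alpha>, \<alpha>\<rangle>) f0"
  have f: "f \<in> weight_space (\<lambda>h. - \<alpha> h)" unfolding f_def using f0 weight_space_scale by blast
  have ef: "br e f = smult (2 / \<langle>\<alpha>, \<alpha>\<rangle>) (tv \<alpha>)" by (simp add: f_def bracket_scale_right ef0)
  have action: "br (br e f) x = smult (cartan \<beta> \<alpha>) x" if \<beta>: "\<beta> \<in> R" "x \<in> weight_space \<beta>" for \<beta> x
  proof -
    have "br e f \<in> H" using ef tvec_in_H[OF rep\<alpha>] subspace_scale[OF H_subspace] by simp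
    then have "br (br e f) x = smult (\<beta> (br e f)) x" using \<beta>(2) by (simp add: mem_weight_space_iff)
    also have "\<beta> (br e f) = 2 / \<langle>\<alpha>, \<alpha>\<rangle> * \<beta> (tv \<alpha>)"
      using ef \<beta>(1) tvec_in_H[OF rep\<alpha>] by (simp add: mem_roots_iff dual_of_def)
    also have "\<beta> (tv \<alpha>) = \<langle>\<beta>, \<alpha>\<rangle>"
      using rform_eval[OF rep\<alpha> roots_representable[OF \<beta>(1)]] by (simp add: rform_sym)
    finally show ?thesis by (simp add: cartan_def)
  qed
  show ?thesis
  proof (rule that[OF e f _ _ _ _ action])
    show "br (br e f) e = smult 2 e" using action[OF \<alpha>R e] \<alpha>\<alpha> by (simp add: cartan_def)
    show "br (br e f) f = smult (-2) f"
      using action[OF roots_uminus[OF \<alpha>R] f] \<alpha>\<alpha> rep\<alpha> by (simp add: cartan_def rform_uminus_left)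
    show "\<forall>y. \<exists>n. (br e ^^ n) y = 0" using nonisotropic_root_vector_nilpotent \<alpha> e by blast
    show "\<forall>y. \<exists>n. (br f ^^ n) y = 0"
      using nonisotropic_root_vector_nilpotent nonisotropic_roots_uminus[OF \<alpha>] f by blast
  qed
qed

lemma cartan_int:
  assumes "\<alpha> \<in> R\<^sub>x" and \<beta>: "\<beta> \<in> R"
  shows "\<exists>k::int. cartan \<beta> \<alpha> = of_int k"
proof -
  obtain x where x: "x \<in> weight_space \<beta>" "x \<noteq> 0" using \<beta> by (auto simp: mem_roots_iff)
  obtain e f where "br (br e f) e = smult 2 e" "br (br e f) f = smult (-2) f"
    "\<forall>y. \<exists>n. (br e ^^ n) y = 0" "\<forall>y. \<exists>n. (br f ^^ n) y = 0"
    "\<And>\<beta> x. \<beta> \<in> R \<Longrightarrow> x \<in> weight_space \<beta> \<Longrightarrow> br (br e f) x = smult (cartan \<beta> \<alpha>) x"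
    by (rule sl2_triple[OF assms(1)]) blast
  then show ?thesis using sl2_weight_int x \<beta> by blast
qed

lemma root_diff_if_cartan_pos:
  assumes \<alpha>: "\<alpha> \<in> R\<^sub>x" and \<beta>: "\<beta> \<in> R" and pos: "0 < Re (cartan \<beta> \<alpha>)"
  shows "(\<lambda>h. \<beta> h - \<alpha> h) \<in> R"
proof -
  obtain x where x: "x \<in> weight_space \<beta>" "x \<noteq> 0" using \<beta> by (auto simp: mem_roots_iff)
  obtain e f where f: "f \<in> weight_space (\<lambda>h. - \<alpha> h)"
    and he: "br (br e f) e = smult 2 e" and e_nil: "\<forall>y. \<exists>n. (br e ^^ n) y = 0"
    and action: "\<And>\<beta> x. \<beta> \<in> R \<Longrightarrow> x \<in> weight_space \<beta> \<Longrightarrow>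
      br (br e f) x = smult (cartan \<beta> \<alpha>) x"
    by (rule sl2_triple[OF \<alpha>]) blast
  note hx = action[OF \<beta> x(1)]
  have "br f x \<noteq> 0"
  proof
    assume "br f x = 0"
    then obtain n :: nat where "cartan \<beta> \<alpha> = - of_nat n"
      using sl2_lowest_weight[OF he e_nil x(2) hx] by blast
    then show False using pos by simp
  qed
  moreover have "br f x \<in> weight_space (\<lambda>h. \<beta> h - \<alpha> h)"
    using bracket_weight_spaces[OF f x(1)] by (simp add: add.commute)
  moreover have "dual_of smult H (\<lambda>h. \<beta> h - \<alpha> h)"
    using \<alpha> \<beta> by (intro dual_of_diff) (simp_all add: mem_roots_iff nonisotropic_roots_iff)
  ultimately show ?thesis by (auto simp: mem_roots_iff)
qed

section \<open>Isotropic roots\<close>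

lemma ad_pow_weight_space:
  assumes "x \<in> weight_space \<delta>" "m \<in> weight_space \<mu>"
  shows "(br x ^^ j) m \<in> weight_space (\<lambda>h. \<mu> h + of_nat j * \<delta> h)"
proof (induction j)
  case 0
  then show ?case using assms(2) by simp
next
  case (Suc j)
  then show ?case
    using bracket_weight_spaces[OF assms(1) Suc]
    by (simp add: algebra_simps)
qed

lemma norm_le_pairing:
  assumes \<delta>: "\<delta> \<in> R" and \<gamma>: "\<gamma> \<in> R" and d: "\<langle>\<delta>, \<gamma>\<rangle> \<noteq> 0"
  shows "cmod \<langle>\<gamma>, \<gamma>\<rangle> \<le> 2 * cmod \<langle>\<delta>, \<gamma>\<rangle>"
proof (cases "\<langle>\<gamma>, \<gamma>\<rangle> = 0")
  case False
  then have "\<gamma> \<in> R\<^sub>x" using \<gamma> by (simp add: nonisotropic_roots_iff)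
  then obtain m :: int where "cartan \<delta> \<gamma> = of_int m" using cartan_int \<delta> by blast
  then have m: "2 * \<langle>\<delta>, \<gamma>\<rangle> = of_int m * \<langle>\<gamma>, \<gamma>\<rangle>" using False by (simp add: cartan_def divide_eq_eq)
  then have "m \<noteq> 0" using d by auto
  then have "1 * cmod \<langle>\<gamma>, \<gamma>\<rangle> \<le> \<bar>real_of_int m\<bar> * cmod \<langle>\<gamma>, \<gamma>\<rangle>" by (intro mult_right_mono) simp_all
  also have "\<dots> = 2 * cmod \<langle>\<delta>, \<gamma>\<rangle>" using arg_cong[OF m, of cmod] by (simp add: norm_mult)
  finally show ?thesis by simp
qed simp

text \<open>Along the string \<open>\<alpha> + k\<delta>\<close> the form \<open>\<langle>\<gamma>, \<gamma>\<rangle>\<close> grows linearly in k, while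
  integrality of \<open>2\<langle>\<delta>, \<gamma>\<rangle> / \<langle>\<gamma>, \<gamma>\<rangle>\<close> caps it: so only finitely many k give roots.\<close>

lemma isotropic_string_bounded:
  assumes \<delta>: "\<delta> \<in> R\<^sub>0" and \<alpha>: "\<alpha> \<in> R\<^sub>x" and d: "\<langle>\<delta>, \<alpha>\<rangle> \<noteq> 0"
  obtains K :: real where "\<And>k::int. (\<lambda>h. \<alpha> h + of_int k * \<delta> h) \<in> R \<Longrightarrow> \<bar>real_of_int k\<bar> \<le> K"
proof
  define \<gamma> where "\<gamma> k = (\<lambda>h. \<alpha> h + of_int k * \<delta> h)" for k :: int
  define a where "a = \<langle>\<alpha>, \<alpha>\<rangle>"
  define d where "d = \<langle>\<delta>, \<alpha>\<rangle>"
  have rep: "representable \<alpha>" "representable \<delta>"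
    using \<alpha> \<delta> roots_representable by (auto simp: nonisotropic_roots_iff isotropic_roots_iff)
  have \<delta>\<delta>: "\<langle>\<delta>, \<delta>\<rangle> = 0" and \<delta>R: "\<delta> \<in> R" using \<delta> by (auto simp: isotropic_roots_iff)
  have \<delta>\<gamma>: "\<langle>\<delta>, \<gamma> k\<rangle> = d" for k
    using rep \<delta>\<delta> by (simp add: \<gamma>_def d_def rform_add_right rform_scale_right)
  have \<gamma>\<gamma>: "\<langle>\<gamma> k, \<gamma> k\<rangle> = a + 2 * of_int k * d" for k
  proof -
    have "\<langle>\<gamma> k, \<gamma> k\<rangle> = \<langle>\<alpha>, \<gamma> k\<rangle> + of_int k * \<langle>\<delta>, \<gamma> k\<rangle>"
      using rep by (simp add: \<gamma>_def rform_add_left rform_scale_left)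
    also have "\<langle>\<alpha>, \<gamma> k\<rangle> = a + of_int k * d"
      using rep by (simp add: \<gamma>_def a_def d_def rform_add_right rform_scale_right rform_sym[of \<alpha> \<delta>])
    finally show ?thesis using \<delta>\<gamma>[of k] by (simp add: algebra_simps)
  qed
  fix k :: int
  assume "(\<lambda>h. \<alpha> h + of_int k * \<delta> h) \<in> R"
  then have \<gamma>R: "\<gamma> k \<in> R" by (simp add: \<gamma>_def)
  have "cmod (a + 2 * of_int k * d) \<le> 2 * cmod d"
    using norm_le_pairing[OF \<delta>R \<gamma>R] \<delta>\<gamma>[of k] \<gamma>\<gamma>[of k] d by (simp add: d_def)
  moreover have "2 * \<bar>real_of_int k\<bar> * cmod d \<le> cmod (a + 2 * of_int k * d) + cmod a"
    using norm_triangle_ineq4[of "a + 2 * of_int k * d" a] by (simp add: norm_mult)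
  moreover have "cmod d > 0" using d by (simp add: d_def)
  ultimately show "\<bar>real_of_int k\<bar> \<le> (cmod \<langle>\<alpha>, \<alpha>\<rangle> + 2 * cmod \<langle>\<delta>, \<alpha>\<rangle>) / (2 * cmod \<langle>\<delta>, \<alpha>\<rangle>)"
    by (simp add: a_def d_def pos_le_divide_eq algebra_simps)
qed

lemma ad_pow_vanishes_on_bounded_string:
  assumes x: "x \<in> weight_space \<delta>" and dual: "dual_of smult H \<alpha>" "dual_of smult H \<delta>"
    and K: "\<And>k::int. (\<lambda>h. \<alpha> h + of_int k * \<delta> h) \<in> R \<Longrightarrow> \<bar>real_of_int k\<bar> \<le> K"
    and N: "2 * K < real N" and m: "m \<in> weight_space (\<lambda>h. \<alpha> h + of_int k * \<delta> h)"
  shows "(br x ^^ N) m = 0"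
proof (rule ccontr)
  assume nz: "(br x ^^ N) m \<noteq> 0"
  have dual_string: "dual_of smult H (\<lambda>h. \<alpha> h + of_int l * \<delta> h)" for l
    by (intro dual_of_add dual_of_scale dual)
  have "(br x ^^ N) m \<in> weight_space (\<lambda>h. \<alpha> h + of_int (k + int N) * \<delta> h)"
    using ad_pow_weight_space[OF x m, of N] by (simp add: algebra_simps)
  then have "(\<lambda>h. \<alpha> h + of_int (k + int N) * \<delta> h) \<in> R"
    using dual_string nz unfolding mem_roots_iff by blast
  then have "\<bar>real_of_int (k + int N)\<bar> \<le> K" by (rule K)
  moreover have "\<bar>real_of_int k\<bar> \<le> K"
    using K dual_string m nz by (cases "m = 0") (auto simp: mem_roots_iff)
  ultimately show False using N by linarith
qed

text \<open>If \<open>\<langle>\<delta>, \<alpha>\<rangle> = d \<noteq> 0\<close>, root vectors x, y for \<open>\<plusminus>\<delta>\<close> with \<open>[x, y] = t\<^sub>\<delta>\<close> span a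
  Heisenberg algebra acting on the sum of the weight spaces along the string \<open>\<alpha> + k\<delta>\<close>, with
  \<open>t\<^sub>\<delta>\<close> acting by d; the string being bounded, x acts nilpotently, which forces the
  module, and with it the root space of \<open>\<alpha>\<close>, to vanish.\<close>

lemma isotropic_orthogonal_nonisotropic:
  assumes \<delta>: "\<delta> \<in> R\<^sub>0" and \<alpha>: "\<alpha> \<in> R\<^sub>x"
  shows "\<langle>\<delta>, \<alpha>\<rangle> = 0"
proof (rule ccontr)
  assume d: "\<langle>\<delta>, \<alpha>\<rangle> \<noteq> 0"
  define \<gamma> where "\<gamma> k = (\<lambda>h. \<alpha> h + of_int k * \<delta> h)" for k :: int
  define M where "M = (\<Union>k. weight_space (\<gamma> k))"
  have \<alpha>R: "\<alpha> \<in> R" and \<delta>R: "\<delta> \<in> R" and \<delta>\<delta>: "\<langle>\<delta>, \<delta>\<rangle> = 0"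
    using \<alpha> \<delta> by (auto simp: nonisotropic_roots_iff isotropic_roots_iff)
  have rep: "representable \<alpha>" "representable \<delta>" using \<alpha>R \<delta>R roots_representable by auto
  obtain x y where x: "x \<in> weight_space \<delta>" and y: "y \<in> weight_space (\<lambda>h. - \<delta> h)"
    and xy: "br x y = tv \<delta>"
    using root_vectors_bracket_tvec[OF \<delta>R] by blast
  have closed: "br y m \<in> M" if "m \<in> M" for m
  proof -
    obtain k where "m \<in> weight_space (\<gamma> k)" using \<open>m \<in> M\<close> by (auto simp: M_def)
    then have "br y m \<in> weight_space (\<gamma> (k - 1))"
      using bracket_weight_spaces[OF y] by (simp add: \<gamma>_def algebra_simps)
    then show ?thesis by (auto simp: M_def)
  qed
  have central: "br (br x y) ((br x ^^ j) m) = smult \<langle>\<delta>, \<alpha>\<rangle> ((br x ^^ j) m)" if "m \<in> M" for m j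
  proof -
    obtain k where mk: "m \<in> weight_space (\<gamma> k)" using \<open>m \<in> M\<close> by (auto simp: M_def)
    have "(br x ^^ j) m \<in> weight_space (\<gamma> (k + int j))"
      using ad_pow_weight_space[OF x mk, of j] by (simp add: \<gamma>_def algebra_simps)
    then have "br (tv \<delta>) ((br x ^^ j) m) = smult (\<gamma> (k + int j) (tv \<delta>)) ((br x ^^ j) m)"
      using tvec_in_H[OF rep(2)] by (simp add: mem_weight_space_iff)
    moreover have "\<gamma> l (tv \<delta>) = \<langle>\<delta>, \<alpha>\<rangle>" for l
      using rep \<delta>\<delta> by (simp add: \<gamma>_def rform_eval[symmetric] flip: of_int_mult)
    ultimately show ?thesis using xy by simp
  qed
  obtain K where K: "\<And>k::int. (\<lambda>h. \<alpha> h + of_int k * \<delta> h) \<in> R \<Longrightarrow> \<bar>real_of_int k\<bar> \<le> K"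
    using isotropic_string_bounded[OF \<delta> \<alpha> d] by blast
  obtain N :: nat where N: "2 * K < real N" using reals_Archimedean2 by blast
  have dual: "dual_of smult H \<alpha>" "dual_of smult H \<delta>" using \<alpha>R \<delta>R by (auto simp: mem_roots_iff)
  have nilpotent: "(br x ^^ N) m = 0" if "m \<in> M" for m
    using that ad_pow_vanishes_on_bounded_string[OF x dual K N] by (auto simp: M_def \<gamma>_def)
  obtain e where e: "e \<in> weight_space \<alpha>" "e \<noteq> 0" using \<alpha>R by (auto simp: mem_roots_iff)
  then have "e \<in> M" by (auto simp: M_def \<gamma>_def intro!: exI[of _ 0])
  with e(2) show False using heisenberg_nilpotent_action_zero[OF d closed central nilpotent] by blast
qed

lemma isotropic_shift_not_root:
  assumes \<delta>: "\<delta> \<in> R\<^sub>0" and \<delta>': "\<delta>' \<in> R\<^sub>0" and c: "\<langle>\<delta>, \<delta>'\<rangle> \<noteq> 0" and \<epsilon>: "\<epsilon> = 1 \<or> \<epsilon> = -1"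
  shows "(\<lambda>h. \<delta>' h + \<epsilon> * \<delta> h) \<notin> R"
proof
  assume \<gamma>R: "(\<lambda>h. \<delta>' h + \<epsilon> * \<delta> h) \<in> R"
  have rep: "representable \<delta>" "representable \<delta>'" and \<delta>\<delta>: "\<langle>\<delta>, \<delta>\<rangle> = 0"
    using \<delta> \<delta>' roots_representable by (auto simp: isotropic_roots_iff)
  have \<delta>\<gamma>: "\<langle>\<delta>, \<lambda>h. \<delta>' h + \<epsilon> * \<delta> h\<rangle> = \<langle>\<delta>, \<delta>'\<rangle>"
    using rep \<delta>\<delta> by (simp add: rform_add_right rform_scale_right)
  have "\<langle>\<lambda>h. \<delta>' h + \<epsilon> * \<delta> h, \<lambda>h. \<delta>' h + \<epsilon> * \<delta> h\<rangle>
      = \<langle>\<delta>', \<lambda>h. \<delta>' h + \<epsilon> * \<delta> h\<rangle> + \<epsilon> * \<langle>\<delta>, \<delta>'\<rangle>"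
    using rep \<delta>\<gamma> by (simp add: rform_add_left rform_scale_left)
  also have "\<langle>\<delta>', \<lambda>h. \<delta>' h + \<epsilon> * \<delta> h\<rangle> = \<epsilon> * \<langle>\<delta>, \<delta>'\<rangle>"
    using rep \<delta>' by (simp add: rform_add_right rform_scale_right rform_sym[of \<delta>' \<delta>] isotropic_roots_iff)
  finally have "\<langle>\<lambda>h. \<delta>' h + \<epsilon> * \<delta> h, \<lambda>h. \<delta>' h + \<epsilon> * \<delta> h\<rangle> = 2 * \<epsilon> * \<langle>\<delta>, \<delta>'\<rangle>"
    by simp
  then have "(\<lambda>h. \<delta>' h + \<epsilon> * \<delta> h) \<in> R\<^sub>x" using \<gamma>R \<epsilon> c by (auto simp: nonisotropic_roots_iff)
  then show False using isotropic_orthogonal_nonisotropic[OF \<delta>] \<delta>\<gamma> c by simp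
qed

text \<open>With \<open>[x, y] = t\<^sub>\<delta>\<close> and \<open>x'\<close> a root vector of \<open>\<delta>'\<close>, the Jacobi identity turns
  \<open>[t\<^sub>\<delta>, x'] = \<langle>\<delta>, \<delta>'\<rangle> x' \<noteq> 0\<close> into \<open>[y, x'] \<noteq> 0\<close> or \<open>[x', x] \<noteq> 0\<close>.\<close>

lemma isotropic_orthogonal_isotropic:
  assumes \<delta>: "\<delta> \<in> R\<^sub>0" and \<delta>': "\<delta>' \<in> R\<^sub>0"
  shows "\<langle>\<delta>, \<delta>'\<rangle> = 0"
proof (rule ccontr)
  assume c: "\<langle>\<delta>, \<delta>'\<rangle> \<noteq> 0"
  have \<delta>R: "\<delta> \<in> R" "\<delta>' \<in> R" using \<delta> \<delta>' by (auto simp: isotropic_roots_iff)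
  have rep: "representable \<delta>" "representable \<delta>'" using \<delta>R roots_representable by auto
  obtain x y where x: "x \<in> weight_space \<delta>" and y: "y \<in> weight_space (\<lambda>h. - \<delta> h)"
    and xy: "br x y = tv \<delta>"
    using root_vectors_bracket_tvec[OF \<delta>R(1)] by blast
  obtain x' where x': "x' \<in> weight_space \<delta>'" "x' \<noteq> 0" using \<delta>R(2) by (auto simp: mem_roots_iff)
  have "br (tv \<delta>) x' = smult \<langle>\<delta>, \<delta>'\<rangle> x'"
    using x'(1) tvec_in_H[OF rep(1)] rform_eval[OF rep] by (simp add: mem_weight_space_iff)
  then have "br x' (br x y) = - smult \<langle>\<delta>, \<delta>'\<rangle> x'"
    using xy bracket_antisym[of x' "tv \<delta>"] by simp
  moreover have "br x (br y x') + br y (br x' x) = - br x' (br x y)"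
    using jacobi[of x y x'] by (simp only: eq_neg_iff_add_eq_0)
  ultimately have "br x (br y x') + br y (br x' x) = smult \<langle>\<delta>, \<delta>'\<rangle> x'" by simp
  with c x'(2) have "br y x' \<noteq> 0 \<or> br x' x \<noteq> 0" by auto
  moreover have "br y x' \<in> weight_space (\<lambda>h. \<delta>' h + -1 * \<delta> h)"
    using bracket_weight_spaces[OF y x'(1)] by (simp add: add.commute)
  moreover have "br x' x \<in> weight_space (\<lambda>h. \<delta>' h + 1 * \<delta> h)"
    using bracket_weight_spaces[OF x'(1) x] by simp
  moreover have "(\<lambda>h. \<delta>' h + \<epsilon> * \<delta> h) \<in> R"
    if "z \<in> weight_space (\<lambda>h. \<delta>' h + \<epsilon> * \<delta> h)" "z \<noteq> 0" for z \<epsilon>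
    using that \<delta>R by (auto simp: mem_roots_iff intro: dual_of_add dual_of_scale)
  ultimately show False using isotropic_shift_not_root[OF \<delta> \<delta>' c] by blast
qed

lemma isotropic_orthogonal_roots:
  assumes "\<delta> \<in> R\<^sub>0" "\<gamma> \<in> R"
  shows "\<langle>\<delta>, \<gamma>\<rangle> = 0"
proof (cases "\<langle>\<gamma>, \<gamma>\<rangle> = 0")
  case True
  then have "\<gamma> \<in> R\<^sub>0" using assms(2) by (simp add: isotropic_roots_iff)
  then show ?thesis by (rule isotropic_orthogonal_isotropic[OF assms(1)])
next
  case False
  then have "\<gamma> \<in> R\<^sub>x" using assms(2) by (simp add: nonisotropic_roots_iff)
  then show ?thesis by (rule isotropic_orthogonal_nonisotropic[OF assms(1)])
qed

section \<open>The radical \<open>V\<^sup>0\<close>\<close>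

abbreviation V where "V \<equiv> Vsp br smult H"
abbreviation V\<^sub>0 where "V\<^sub>0 \<equiv> V0 br smult B H"

lemma mem_V_iff: "v \<in> V \<longleftrightarrow> (\<exists>c F. v = rcomb c F \<and> finite F \<and> F \<subseteq> R)"
  by (auto simp: Vsp_def real_span_def)

lemma rcomb_in_V: "finite F \<Longrightarrow> F \<subseteq> R \<Longrightarrow> rcomb c F \<in> V"
  by (auto simp: mem_V_iff)

lemma V_representable: "v \<in> V \<Longrightarrow> representable v"
  using roots_representable by (auto simp: mem_V_iff intro!: representable_rcomb)

lemma roots_in_V: "\<beta> \<in> R \<Longrightarrow> \<beta> \<in> V"
  using rcomb_in_V[of "{\<beta>}" "\<lambda>_. 1"] by (simp add: rcomb_def)

lemma uminus_in_V: "v \<in> V \<Longrightarrow> (\<lambda>x. - v x) \<in> V"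
proof -
  assume "v \<in> V"
  then obtain c F where "v = rcomb c F" "finite F" "F \<subseteq> R" by (auto simp: mem_V_iff)
  then show ?thesis
    using rcomb_in_V[of F "\<lambda>\<beta>. - c \<beta>"] by (simp add: rcomb_def sum_negf)
qed

lemma mem_V0_iff: "v \<in> V\<^sub>0 \<longleftrightarrow> v \<in> V \<and> (\<forall>w\<in>V. \<langle>v, w\<rangle> = 0)"
  by (simp add: V0_def)

lemma V0_if_orthogonal_roots:
  assumes v: "v \<in> V" and orth: "\<And>\<gamma>. \<gamma> \<in> R \<Longrightarrow> \<langle>v, \<gamma>\<rangle> = 0"
  shows "v \<in> V\<^sub>0"
proof -
  have "\<langle>v, w\<rangle> = 0" if "w \<in> V" for w
  proof -
    obtain c F where w: "w = rcomb c F" "finite F" "F \<subseteq> R" using \<open>w \<in> V\<close> by (auto simp: mem_V_iff)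
    have "\<langle>v, w\<rangle> = (\<Sum>\<beta>\<in>F. of_real (c \<beta>) * \<langle>v, \<beta>\<rangle>)"
      unfolding w(1) using w(3) roots_representable by (intro rform_rcomb_right[OF w(2)]) auto
    also have "\<dots> = 0" using w(3) orth by (intro sum.neutral) auto
    finally show ?thesis .
  qed
  with v show ?thesis by (simp add: mem_V0_iff)
qed

lemma isotropic_roots_in_V0: "\<delta> \<in> R\<^sub>0 \<Longrightarrow> \<delta> \<in> V\<^sub>0"
  using V0_if_orthogonal_roots roots_in_V isotropic_orthogonal_roots
  by (simp add: isotropic_roots_iff)

lemma zero_in_V0: "(\<lambda>x. 0) \<in> V\<^sub>0"
  using rcomb_in_V[of "{}"] by (simp add: mem_V0_iff rform_def rcomb_def)

lemma uminus_in_V0: "v \<in> V\<^sub>0 \<Longrightarrow> (\<lambda>x. - v x) \<in> V\<^sub>0"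
  using uminus_in_V V_representable by (simp add: mem_V0_iff rform_uminus_left)

section \<open>Classes of nonisotropic roots\<close>

abbreviation classes where "classes \<equiv> root_classes br smult B H"

definition root_equiv :: "(('g \<Rightarrow> complex) \<times> ('g \<Rightarrow> complex)) set"
  where "root_equiv = (root_rel br smult B H \<union> (root_rel br smult B H)\<inverse>)\<^sup>+ \<union> Id_on R\<^sub>x"

lemma classes_eq: "classes = R\<^sub>x // root_equiv"
  by (simp add: root_classes_def root_equiv_def)

lemma mem_root_rel_sym_iff:
  "(\<alpha>, \<beta>) \<in> root_rel br smult B H \<union> (root_rel br smult B H)\<inverse> \<longleftrightarrow>
    \<alpha> \<in> R\<^sub>x \<and> \<beta> \<in> R\<^sub>x \<and> \<langle>\<alpha>, \<beta>\<rangle> \<noteq> 0"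
  by (auto simp: root_rel_def rform_sym)

lemma equiv_root_equiv: "equiv R\<^sub>x root_equiv"
proof -
  have "(root_rel br smult B H \<union> (root_rel br smult B H)\<inverse>)\<^sup>+ \<subseteq> R\<^sub>x \<times> R\<^sub>x"
    using mem_root_rel_sym_iff by (intro trancl_subset_Sigma) auto
  moreover have "sym ((root_rel br smult B H \<union> (root_rel br smult B H)\<inverse>)\<^sup>+)"
    by (intro sym_trancl) (auto simp: sym_def)
  ultimately show ?thesis
    unfolding root_equiv_def equiv_def refl_on_def sym_def trans_def
    by (auto intro: trancl_trans)
qed

lemma classes_subset: "C \<in> classes \<Longrightarrow> C \<subseteq> R\<^sub>x"
  using in_quotient_imp_subset[OF equiv_root_equiv] by (simp add: classes_eq)

lemma class_closed:
  assumes C: "C \<in> classes" and \<alpha>: "\<alpha> \<in> C" and \<gamma>: "\<gamma> \<in> R\<^sub>x" and nz: "\<langle>\<alpha>, \<gamma>\<rangle> \<noteq> 0"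
  shows "\<gamma> \<in> C"
proof -
  have "(\<alpha>, \<gamma>) \<in> root_equiv"
    using classes_subset[OF C] \<alpha> \<gamma> nz mem_root_rel_sym_iff by (auto simp: root_equiv_def)
  then show ?thesis using in_quotient_imp_closed[OF equiv_root_equiv] C \<alpha> by (auto simp: classes_eq)
qed

lemma class_orthogonal:
  "C \<in> classes \<Longrightarrow> \<alpha> \<in> C \<Longrightarrow> \<gamma> \<in> R\<^sub>x \<Longrightarrow> \<gamma> \<notin> C \<Longrightarrow> \<langle>\<alpha>, \<gamma>\<rangle> = 0"
  using class_closed by blast

lemma classes_orthogonal:
  assumes "C \<in> classes" "D \<in> classes" "C \<noteq> D" "\<alpha> \<in> C" "\<gamma> \<in> D"
  shows "\<langle>\<alpha>, \<gamma>\<rangle> = 0"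
  using assms quotient_disj[OF equiv_root_equiv] classes_subset class_orthogonal
  by (simp add: classes_eq) blast

lemma class_of: "\<gamma> \<in> R\<^sub>x \<Longrightarrow> \<exists>C\<in>classes. \<gamma> \<in> C"
  using quotientI[of \<gamma> R\<^sub>x root_equiv] equiv_class_self[OF equiv_root_equiv]
  by (auto simp: classes_eq)

lemma class_uminus:
  assumes C: "C \<in> classes" and \<alpha>: "\<alpha> \<in> C"
  shows "(\<lambda>h. - \<alpha> h) \<in> C"
proof (rule class_closed[OF C \<alpha>])
  have "\<alpha> \<in> R\<^sub>x" using classes_subset[OF C] \<alpha> by blast
  then show "(\<lambda>h. - \<alpha> h) \<in> R\<^sub>x" and "\<langle>\<alpha>, \<lambda>h. - \<alpha> h\<rangle> \<noteq> 0"
    using nonisotropic_roots_uminus roots_representable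
    by (auto simp: nonisotropic_roots_iff rform_uminus_right)
qed

text \<open>Integrality of the Cartan numbers makes the norms of two non-orthogonal nonisotropic
  roots rational multiples of each other; chaining through a class, all pairings inside it
  are real multiples of one norm.\<close>

lemma nonorthogonal_norm_ratio:
  assumes \<beta>: "\<beta> \<in> R\<^sub>x" and \<gamma>: "\<gamma> \<in> R\<^sub>x" and nz: "\<langle>\<beta>, \<gamma>\<rangle> \<noteq> 0"
  shows "\<exists>q::real. \<langle>\<gamma>, \<gamma>\<rangle> = of_real q * \<langle>\<beta>, \<beta>\<rangle>"
proof -
  have R: "\<beta> \<in> R" "\<gamma> \<in> R" and nz': "\<langle>\<beta>, \<beta>\<rangle> \<noteq> 0" "\<langle>\<gamma>, \<gamma>\<rangle> \<noteq> 0"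
    using \<beta> \<gamma> by (auto simp: nonisotropic_roots_iff)
  obtain k1 k2 :: int where "cartan \<gamma> \<beta> = of_int k1" "cartan \<beta> \<gamma> = of_int k2"
    using cartan_int[OF \<beta> R(2)] cartan_int[OF \<gamma> R(1)] by blast
  then have k1: "2 * \<langle>\<beta>, \<gamma>\<rangle> = of_int k1 * \<langle>\<beta>, \<beta>\<rangle>"
    and k2: "2 * \<langle>\<beta>, \<gamma>\<rangle> = of_int k2 * \<langle>\<gamma>, \<gamma>\<rangle>"
    using nz' by (simp_all add: cartan_def rform_sym[of \<gamma> \<beta>] divide_eq_eq)
  moreover have "k2 \<noteq> 0" using k2 nz by auto
  ultimately have "\<langle>\<gamma>, \<gamma>\<rangle> = of_real (real_of_int k1 / real_of_int k2) * \<langle>\<beta>, \<beta>\<rangle>"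
    by (simp add: field_simps)
  then show ?thesis by blast
qed

lemma class_norm_ratio:
  assumes C: "C \<in> classes" and \<alpha>: "\<alpha> \<in> C" and \<gamma>: "\<gamma> \<in> C"
  shows "\<exists>q::real. \<langle>\<gamma>, \<gamma>\<rangle> = of_real q * \<langle>\<alpha>, \<alpha>\<rangle>"
proof -
  have "(\<alpha>, \<gamma>) \<in> root_equiv"
    using quotient_eq_iff[OF equiv_root_equiv, of C C \<alpha> \<gamma>] C \<alpha> \<gamma> by (simp add: classes_eq)
  then consider "\<alpha> = \<gamma>" | "(\<alpha>, \<gamma>) \<in> (root_rel br smult B H \<union> (root_rel br smult B H)\<inverse>)\<^sup>+"
    unfolding root_equiv_def by auto
  then show ?thesis
  proof cases
    case 1
    then show ?thesis by (intro exI[of _ 1]) simp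
  next
    case 2
    then show ?thesis
    proof (induction rule: trancl_induct)
      case (base \<beta>)
      then show ?case using nonorthogonal_norm_ratio mem_root_rel_sym_iff by blast
    next
      case (step \<beta> \<beta>')
      obtain q1 where "\<langle>\<beta>, \<beta>\<rangle> = of_real q1 * \<langle>\<alpha>, \<alpha>\<rangle>" using step.IH by blast
      moreover obtain q2 where "\<langle>\<beta>', \<beta>'\<rangle> = of_real q2 * \<langle>\<beta>, \<beta>\<rangle>"
        using nonorthogonal_norm_ratio step.hyps(2) mem_root_rel_sym_iff by blast
      ultimately have "\<langle>\<beta>', \<beta>'\<rangle> = of_real (q2 * q1) * \<langle>\<alpha>, \<alpha>\<rangle>" by simp
      then show ?case by blast
    qed
  qed
qed

lemma class_rform_real:
  assumes C: "C \<in> classes" and \<alpha>: "\<alpha> \<in> C" and \<beta>: "\<beta> \<in> C" and \<gamma>: "\<gamma> \<in> C"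
  shows "\<exists>r::real. \<langle>\<beta>, \<gamma>\<rangle> = of_real r * \<langle>\<alpha>, \<alpha>\<rangle>"
proof -
  have \<beta>x: "\<beta> \<in> R\<^sub>x" and \<gamma>R: "\<gamma> \<in> R" using classes_subset[OF C] \<beta> \<gamma>
    by (auto simp: nonisotropic_roots_iff)
  then have \<beta>\<beta>: "\<langle>\<beta>, \<beta>\<rangle> \<noteq> 0" by (simp add: nonisotropic_roots_iff)
  obtain q where q: "\<langle>\<beta>, \<beta>\<rangle> = of_real q * \<langle>\<alpha>, \<alpha>\<rangle>" using class_norm_ratio[OF C \<alpha> \<beta>] by blast
  obtain k :: int where "cartan \<gamma> \<beta> = of_int k" using cartan_int[OF \<beta>x \<gamma>R] by blast
  then have "2 * \<langle>\<beta>, \<gamma>\<rangle> = of_int k * \<langle>\<beta>, \<beta>\<rangle>"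
    using \<beta>\<beta> by (simp add: cartan_def rform_sym[of \<gamma> \<beta>] divide_eq_eq)
  then have "\<langle>\<beta>, \<gamma>\<rangle> = of_real (real_of_int k * q / 2) * \<langle>\<alpha>, \<alpha>\<rangle>" using q by (simp add: field_simps)
  then show ?thesis by blast
qed

lemma class_gram_real:
  assumes C: "C \<in> classes"
  obtains s M where "s \<noteq> 0" "\<And>\<beta> \<gamma>. \<beta> \<in> C \<Longrightarrow> \<gamma> \<in> C \<Longrightarrow> \<langle>\<beta>, \<gamma>\<rangle> = of_real (M \<beta> \<gamma>) * s"
proof -
  obtain a where a: "a \<in> C"
    using C in_quotient_imp_non_empty[OF equiv_root_equiv] by (auto simp: classes_eq)
  define M where "M \<beta> \<gamma> = (SOME r::real. \<langle>\<beta>, \<gamma>\<rangle> = of_real r * \<langle>a, a\<rangle>)" for \<beta> \<gamma>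
  have "\<langle>\<beta>, \<gamma>\<rangle> = of_real (M \<beta> \<gamma>) * \<langle>a, a\<rangle>" if "\<beta> \<in> C" "\<gamma> \<in> C" for \<beta> \<gamma>
    unfolding M_def by (rule someI_ex) (use that class_rform_real[OF C a] in blast)
  moreover have "\<langle>a, a\<rangle> \<noteq> 0" using a classes_subset[OF C] by (auto simp: nonisotropic_roots_iff)
  ultimately show ?thesis using that by blast
qed

section \<open>Decomposition of \<open>H(R)\<close>\<close>

abbreviation H\<^sub>R where "H\<^sub>R \<equiv> HR br smult B H"
abbreviation H\<^sub>R\<^sub>0 where "H\<^sub>R\<^sub>0 \<equiv> HR0 br smult B H"

lemma HR_eq: "H\<^sub>R = span (tv ` R)"
  by (simp add: HR_def)

lemma mem_HR0_iff: "h \<in> H\<^sub>R\<^sub>0 \<longleftrightarrow> h \<in> H\<^sub>R \<and> (\<forall>h'\<in>H\<^sub>R. B h h' = 0)"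
  by (simp add: HR0_def)

lemma HR0_subspace: "subspace H\<^sub>R\<^sub>0"
  by (rule subspaceI)
    (auto simp: mem_HR0_iff HR_eq span_zero span_add span_scale form_add_left form_scale_left)

lemma form_orthogonal_spans:
  assumes "\<And>a b. a \<in> S \<Longrightarrow> b \<in> T \<Longrightarrow> B a b = 0" "x \<in> span S" "y \<in> span T"
  shows "B x y = 0"
proof -
  have "span T \<subseteq> {b. B a b = 0}" if "a \<in> S" for a
    using assms(1)[OF that] by (intro span_minimal orthogonal_subspace) auto
  then have "S \<subseteq> {a. B y a = 0}" using assms(3) by (auto simp: form_sym[of y])
  then have "span S \<subseteq> {a. B y a = 0}" by (intro span_minimal orthogonal_subspace)
  then show ?thesis using assms(2) by (auto simp: form_sym[of x y])
qed

lemma tvec_in_HR: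
  assumes "w \<in> V"
  shows "tv w \<in> H\<^sub>R"
proof -
  obtain c F where w: "w = rcomb c F" "finite F" "F \<subseteq> R" using assms by (auto simp: mem_V_iff)
  then have "tv w = (\<Sum>\<beta>\<in>F. smult (of_real (c \<beta>)) (tv \<beta>))"
    using tvec_rcomb roots_representable by blast
  moreover have "smult (of_real (c \<beta>)) (tv \<beta>) \<in> span (tv ` R)" if "\<beta> \<in> F" for \<beta>
    using that w(3) by (intro span_scale span_base) auto
  ultimately show ?thesis unfolding HR_eq by (simp add: span_sum)
qed

lemma tvec_in_HR0:
  assumes w: "w \<in> V\<^sub>0"
  shows "tv w \<in> H\<^sub>R\<^sub>0"
proof -
  have "B (tv w) (tv \<gamma>) = 0" if "\<gamma> \<in> R" for \<gamma>
    using w roots_in_V[OF that] by (simp add: mem_V0_iff rform_def)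
  then have "span (tv ` R) \<subseteq> {h'. B (tv w) h' = 0}"
    by (intro span_minimal orthogonal_subspace) auto
  then have "\<forall>h'\<in>H\<^sub>R. B (tv w) h' = 0" unfolding HR_eq by blast
  with w show ?thesis by (simp add: mem_HR0_iff mem_V0_iff tvec_in_HR)
qed

lemma isotropic_span_subset_HR0: "span (tv ` R\<^sub>0) \<subseteq> H\<^sub>R\<^sub>0"
  using tvec_in_HR0 isotropic_roots_in_V0 HR0_subspace by (intro span_minimal) auto

end

locale grla_bases = grla smult br B H
  for smult :: "complex \<Rightarrow> 'g::ab_group_add \<Rightarrow> 'g" and br B H +
  fixes bas :: "('g \<Rightarrow> complex) set \<Rightarrow> ('g \<Rightarrow> complex) set"
  assumes bases: "\<And>C. C \<in> root_classes br smult B H \<Longrightarrow> base_preimage br smult B H C (bas C)"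
begin

context
  fixes C
  assumes C: "C \<in> classes"
begin

lemma base_finite: "finite (bas C)"
  and base_subset: "bas C \<subseteq> C"
  and base_independent: "rcomb c (bas C) \<in> V\<^sub>0 \<Longrightarrow> \<beta> \<in> bas C \<Longrightarrow> c \<beta> = 0"
  and base_expansion: "\<alpha> \<in> C \<Longrightarrow> \<exists>n. ((\<forall>\<beta>\<in>bas C. n \<beta> \<ge> 0) \<or> (\<forall>\<beta>\<in>bas C. n \<beta> \<le> 0)) \<and>
      (\<lambda>x. \<alpha> x - rcomb (\<lambda>\<beta>. real_of_int (n \<beta>)) (bas C) x) \<in> V\<^sub>0"
  using bases[OF C] unfolding base_preimage_def by blast+

lemma base_roots: "bas C \<subseteq> R"
  using base_subset classes_subset[OF C] by (auto simp: nonisotropic_roots_iff)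

lemma base_representable: "\<beta> \<in> bas C \<Longrightarrow> representable \<beta>"
  using base_roots roots_representable by blast

end

abbreviation Hd where "Hd C \<equiv> Hdot br smult B H C (bas C)"

lemma Hd_eq_span:
  assumes C: "C \<in> classes"
  shows "Hd C = span (tv ` bas C)"
proof
  have "bas C \<subseteq> Rdot br smult B H C (bas C)"
  proof
    fix \<beta> assume \<beta>: "\<beta> \<in> bas C"
    have "\<beta> = rcomb (\<lambda>_. 1) {\<beta>}" by (simp add: rcomb_def)
    then have "\<beta> \<in> real_span (bas C)" using \<beta> unfolding real_span_def by blast
    moreover have "(\<lambda>x. \<beta> x - \<beta> x) \<in> V\<^sub>0" using zero_in_V0 by simp
    ultimately show "\<beta> \<in> Rdot br smult B H C (bas C)"
      using \<beta> base_subset[OF C] unfolding Rdot_def by blast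
  qed
  then show "span (tv ` bas C) \<subseteq> Hd C" unfolding Hdot_def by (intro span_mono) blast
  show "Hd C \<subseteq> span (tv ` bas C)"
    unfolding Hdot_def
  proof (intro span_minimal subsetI)
    fix t assume "t \<in> tv ` Rdot br smult B H C (bas C)"
    then obtain c F where t: "t = tv (rcomb c F)" and F: "finite F" "F \<subseteq> bas C"
      unfolding Rdot_def real_span_def by blast
    then have "t = (\<Sum>\<beta>\<in>F. smult (of_real (c \<beta>)) (tv \<beta>))"
      using tvec_rcomb base_representable[OF C] by blast
    moreover have "smult (of_real (c \<beta>)) (tv \<beta>) \<in> span (tv ` bas C)" if "\<beta> \<in> F" for \<beta>
      using that F(2) by (intro span_scale span_base) auto
    ultimately show "t \<in> span (tv ` bas C)" by (simp add: span_sum)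
  qed simp
qed

lemma Hd_subset_HR:
  assumes "C \<in> classes"
  shows "Hd C \<subseteq> H\<^sub>R"
  unfolding Hd_eq_span[OF assms] HR_eq using base_roots[OF assms] by (intro span_mono) blast

lemma Hd_orthogonal:
  assumes "C \<in> classes" "D \<in> classes" "C \<noteq> D" "x \<in> Hd C" "y \<in> Hd D"
  shows "B x y = 0"
proof (rule form_orthogonal_spans[of "tv ` bas C" "tv ` bas D"])
  show "B a b = 0" if "a \<in> tv ` bas C" "b \<in> tv ` bas D" for a b
    using that assms(1-3) base_subset classes_orthogonal unfolding rform_def by blast
  show "x \<in> span (tv ` bas C)" "y \<in> span (tv ` bas D)" using assms by (simp_all add: Hd_eq_span)
qed

lemma base_orthogonal_comb_in_V0:
  assumes C: "C \<in> classes" and orth: "\<And>\<gamma>. \<gamma> \<in> bas C \<Longrightarrow> \<langle>rcomb r (bas C), \<gamma>\<rangle> = 0"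
  shows "rcomb r (bas C) \<in> V\<^sub>0"
proof (rule V0_if_orthogonal_roots)
  let ?v = "rcomb r (bas C)"
  have fin: "finite (bas C)" and rep: "\<And>\<beta>. \<beta> \<in> bas C \<Longrightarrow> representable \<beta>"
    using base_finite[OF C] base_representable[OF C] by auto
  show v: "?v \<in> V" using rcomb_in_V[OF fin base_roots[OF C]] .
  have expand: "\<langle>?v, \<gamma>\<rangle> = (\<Sum>\<beta>\<in>bas C. of_real (r \<beta>) * \<langle>\<beta>, \<gamma>\<rangle>)" for \<gamma>
    by (rule rform_rcomb_left[OF fin rep])
  fix \<gamma> assume \<gamma>: "\<gamma> \<in> R"
  consider "\<gamma> \<in> R\<^sub>0" | "\<gamma> \<in> R\<^sub>x" "\<gamma> \<notin> C" | "\<gamma> \<in> C"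
    using \<gamma> by (auto simp: isotropic_roots_iff nonisotropic_roots_iff)
  then show "\<langle>?v, \<gamma>\<rangle> = 0"
  proof cases
    case 1
    have "\<langle>\<beta>, \<gamma>\<rangle> = 0" if "\<beta> \<in> bas C" for \<beta>
      using isotropic_orthogonal_roots[OF 1] base_roots[OF C] that rform_sym[of \<beta> \<gamma>] by auto
    then show ?thesis by (simp add: expand)
  next
    case 2
    then show ?thesis
      using class_orthogonal[OF C] base_subset[OF C] by (auto simp: expand intro!: sum.neutral)
  next
    case 3
    then obtain n where n: "(\<lambda>x. \<gamma> x - rcomb (\<lambda>\<beta>. real_of_int (n \<beta>)) (bas C) x) \<in> V\<^sub>0"
      using base_expansion[OF C] by blast
    have "\<langle>?v, \<lambda>x. \<gamma> x - rcomb (\<lambda>\<beta>. real_of_int (n \<beta>)) (bas C) x\<rangle> = 0"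
      using n v by (simp add: mem_V0_iff rform_sym[of ?v])
    then have "\<langle>?v, \<gamma>\<rangle> = \<langle>?v, rcomb (\<lambda>\<beta>. real_of_int (n \<beta>)) (bas C)\<rangle>"
      using roots_representable[OF \<gamma>] fin rep by (simp add: rform_diff_right)
    also have "\<dots> = (\<Sum>\<beta>\<in>bas C. of_real (real_of_int (n \<beta>)) * \<langle>?v, \<beta>\<rangle>)"
      by (rule rform_rcomb_right[OF fin rep])
    also have "\<dots> = 0" using orth by simp
    finally show ?thesis .
  qed
qed

text \<open>Dividing by s makes the Gram matrix of the base real, so a complex null vector yields
  two real ones, which vanish by independence of the base modulo \<open>V\<^sup>0\<close>.\<close>

lemma Hd_nondegenerate:
  assumes C: "C \<in> classes" and x: "x \<in> Hd C" and orth: "\<And>y. y \<in> Hd C \<Longrightarrow> B x y = 0"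
  shows "x = 0"
proof -
  have fin: "finite (bas C)" and rep: "\<And>\<beta>. \<beta> \<in> bas C \<Longrightarrow> representable \<beta>"
    using base_finite[OF C] base_representable[OF C] by auto
  obtain c where c: "x = (\<Sum>\<beta>\<in>bas C. smult (c \<beta>) (tv \<beta>))"
    using span_image_explicit[OF fin] x by (auto simp: Hd_eq_span[OF C])
  obtain s M where s: "s \<noteq> 0"
    and M: "\<And>\<beta> \<gamma>. \<beta> \<in> bas C \<Longrightarrow> \<gamma> \<in> bas C \<Longrightarrow> \<langle>\<beta>, \<gamma>\<rangle> = of_real (M \<beta> \<gamma>) * s"
    using class_gram_real[OF C] base_subset[OF C] by (metis subsetD)
  have null: "(\<Sum>\<beta>\<in>bas C. c \<beta> * of_real (M \<beta> \<gamma>)) = 0" if \<gamma>: "\<gamma> \<in> bas C" for \<gamma>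
  proof -
    have "0 = B x (tv \<gamma>)" using orth \<gamma> by (simp add: Hd_eq_span[OF C] span_base)
    also have "\<dots> = (\<Sum>\<beta>\<in>bas C. c \<beta> * of_real (M \<beta> \<gamma>)) * s"
      using M \<gamma> by (simp add: c form_sum_left form_scale_left sum_distrib_right mult.assoc
          flip: rform_def)
    finally show ?thesis using s by simp
  qed
  have "\<forall>\<beta>\<in>bas C. f (c \<beta>) = 0" if f: "f = Re \<or> f = Im" for f
  proof -
    have "rcomb (\<lambda>\<beta>. f (c \<beta>)) (bas C) \<in> V\<^sub>0"
    proof (rule base_orthogonal_comb_in_V0[OF C])
      fix \<gamma> assume \<gamma>: "\<gamma> \<in> bas C"
      have "(\<Sum>\<beta>\<in>bas C. f (c \<beta>) * M \<beta> \<gamma>) = f (\<Sum>\<beta>\<in>bas C. c \<beta> * of_real (M \<beta> \<gamma>))"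
        using f by (auto simp: Re_sum Im_sum)
      then have "(\<Sum>\<beta>\<in>bas C. f (c \<beta>) * M \<beta> \<gamma>) = 0" using null[OF \<gamma>] f by auto
      moreover have "\<langle>rcomb (\<lambda>\<beta>. f (c \<beta>)) (bas C), \<gamma>\<rangle>
          = of_real (\<Sum>\<beta>\<in>bas C. f (c \<beta>) * M \<beta> \<gamma>) * s"
        using M \<gamma> by (simp add: rform_rcomb_left[OF fin rep] sum_distrib_right mult.assoc)
      ultimately show "\<langle>rcomb (\<lambda>\<beta>. f (c \<beta>)) (bas C), \<gamma>\<rangle> = 0" by simp
    qed
    then show ?thesis using base_independent[OF C] by blast
  qed
  then have "\<forall>\<beta>\<in>bas C. c \<beta> = 0" using complex_eqI by fastforce
  then show ?thesis using c by simp
qed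

definition class_sums :: "'g set \<Rightarrow> 'g set"
  where "class_sums X0 = {x0 + (\<Sum>C\<in>F. x C) | x0 x F. finite F \<and> F \<subseteq> classes \<and>
    x0 \<in> X0 \<and> (\<forall>C\<in>F. x C \<in> Hd C)}"

lemma class_sums_mono: "X0 \<subseteq> X1 \<Longrightarrow> class_sums X0 \<subseteq> class_sums X1"
  unfolding class_sums_def by blast

lemma class_sums_subspace:
  assumes X0: "subspace X0"
  shows "subspace (class_sums X0)"
proof (rule subspaceI)
  show "0 \<in> class_sums X0"
    unfolding class_sums_def using subspace_0[OF X0] by (auto intro!: exI[of _ "0::'g"] exI[of _ "{}"])
next
  fix u v assume "u \<in> class_sums X0" "v \<in> class_sums X0"
  then obtain x0 x F y0 y G where u: "u = x0 + (\<Sum>C\<in>F. x C)" "finite F" "F \<subseteq> classes" "x0 \<in> X0"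
      "\<forall>C\<in>F. x C \<in> Hd C"
    and v: "v = y0 + (\<Sum>C\<in>G. y C)" "finite G" "G \<subseteq> classes" "y0 \<in> X0" "\<forall>C\<in>G. y C \<in> Hd C"
    unfolding class_sums_def by blast
  define z where "z C = (if C \<in> F then x C else 0) + (if C \<in> G then y C else 0)" for C
  have "(\<Sum>C\<in>F \<union> G. z C) = (\<Sum>C\<in>F. x C) + (\<Sum>C\<in>G. y C)"
    using u(2) v(2)
    by (simp add: z_def sum.distrib sum.If_cases Int_absorb1 Int_absorb2 flip: sum.inter_restrict)
  then have "u + v = (x0 + y0) + (\<Sum>C\<in>F \<union> G. z C)" using u(1) v(1) by (simp add: algebra_simps)
  moreover have "z C \<in> Hd C" if "C \<in> F \<union> G" for C
    using that u(5) v(5) unfolding z_def Hdot_def by (auto intro: span_add span_zero)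
  ultimately show "u + v \<in> class_sums X0"
    unfolding class_sums_def using u v subspace_add[OF X0] by blast
next
  fix c u assume "u \<in> class_sums X0"
  then obtain x0 x F where u: "u = x0 + (\<Sum>C\<in>F. x C)" "finite F" "F \<subseteq> classes" "x0 \<in> X0"
      "\<forall>C\<in>F. x C \<in> Hd C"
    unfolding class_sums_def by blast
  then have "smult c u = smult c x0 + (\<Sum>C\<in>F. smult c (x C))"
    by (simp add: scale_right_distrib scale_sum_right)
  moreover have "\<forall>C\<in>F. smult c (x C) \<in> Hd C"
    using u(5) by (simp add: Hdot_def span_scale)
  ultimately show "smult c u \<in> class_sums X0"
    unfolding class_sums_def using u(2-4) subspace_scale[OF X0] by blast
qed

lemma class_sums_subset_HR:
  assumes "X0 \<subseteq> H\<^sub>R"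
  shows "class_sums X0 \<subseteq> H\<^sub>R"
proof
  fix u assume "u \<in> class_sums X0"
  then obtain x0 x F where u: "u = x0 + (\<Sum>C\<in>F. x C)" "F \<subseteq> classes" "x0 \<in> X0"
      "\<forall>C\<in>F. x C \<in> Hd C"
    unfolding class_sums_def by blast
  then have "\<forall>C\<in>F. x C \<in> H\<^sub>R" using Hd_subset_HR by blast
  then show "u \<in> H\<^sub>R"
    using u(1,3) assms unfolding HR_eq by (auto intro: span_add span_sum)
qed

text \<open>Pairing with \<open>Hd D\<close> kills \<open>x0\<close> and every \<open>x C\<close> with \<open>C \<noteq> D\<close>, so \<open>x D\<close> is orthogonal
  to \<open>Hd D\<close>, on which the form is nondegenerate.\<close>

lemma class_sums_unique:
  assumes x0: "x0 \<in> H\<^sub>R\<^sub>0" and F: "finite F" "F \<subseteq> classes"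
    and x: "\<forall>C\<in>F. x C \<in> Hd C" and sum0: "x0 + (\<Sum>C\<in>F. x C) = 0"
  shows "x0 = 0 \<and> (\<forall>C\<in>F. x C = 0)"
proof -
  have xD: "x D = 0" if D: "D \<in> F" for D
  proof (rule Hd_nondegenerate)
    show "D \<in> classes" "x D \<in> Hd D" using D F x by auto
    fix y assume y: "y \<in> Hd D"
    have "B (x C) y = 0" if "C \<in> F - {D}" for C
      using that F x Hd_orthogonal[of C D "x C" y] y D by auto
    moreover have "B x0 y = 0" using x0 y Hd_subset_HR F D by (auto simp: mem_HR0_iff)
    moreover have "0 = B x0 y + B (x D) y + (\<Sum>C\<in>F - {D}. B (x C) y)"
      using arg_cong[OF sum0, of "\<lambda>u. B u y"] sum.remove[OF F(1) D, of "\<lambda>C. B (x C) y"]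
      by (simp add: form_add_left form_sum_left add.assoc)
    ultimately show "B (x D) y = 0" by simp
  qed
  then have "x0 = 0" using sum0 by simp
  with xD show ?thesis by blast
qed

definition base_comb :: "('g \<Rightarrow> complex) set \<Rightarrow> (('g \<Rightarrow> complex) \<Rightarrow> int) \<Rightarrow> 'g \<Rightarrow> complex"
  where "base_comb C n = rcomb (\<lambda>\<beta>. real_of_int (n \<beta>)) (bas C)"

context
  fixes C
  assumes C: "C \<in> classes"
begin

lemma base_comb_in_V: "base_comb C n \<in> V"
  unfolding base_comb_def by (rule rcomb_in_V[OF base_finite[OF C] base_roots[OF C]])

lemma base_comb_representable: "representable (base_comb C n)"
  using V_representable base_comb_in_V by blast

lemma base_comb_in_Rdot:
  assumes "\<alpha> \<in> C" "(\<lambda>x. \<alpha> x - base_comb C n x) \<in> V\<^sub>0"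
  shows "base_comb C n \<in> Rdot br smult B H C (bas C)"
proof -
  have "base_comb C n \<in> real_span (bas C)"
    unfolding base_comb_def real_span_def using base_finite[OF C] by blast
  moreover have "(\<lambda>x. base_comb C n x - \<alpha> x) \<in> V\<^sub>0"
    using uminus_in_V0[OF assms(2)] by simp
  ultimately show ?thesis using assms(1) unfolding Rdot_def by blast
qed

lemma base_comb_remove:
  assumes "\<beta> \<in> bas C"
  shows "base_comb C (\<lambda>b. n b - (if b = \<beta> then 1 else 0)) x = base_comb C n x - \<beta> x"
proof -
  have "base_comb C (\<lambda>b. n b - (if b = \<beta> then 1 else 0)) x
      = (\<Sum>b\<in>bas C. of_int (n b) * b x - (if b = \<beta> then \<beta> x else 0))"
    unfolding base_comb_def rcomb_def by (intro sum.cong) (auto simp: algebra_simps)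
  also have "\<dots> = base_comb C n x - \<beta> x"
    using base_finite[OF C] assms by (simp add: base_comb_def rcomb_def sum_subtractf sum.delta)
  finally show ?thesis .
qed

lemma base_comb_uminus: "base_comb C (\<lambda>b. - n b) = (\<lambda>x. - base_comb C n x)"
  by (simp add: base_comb_def rcomb_def sum_negf)

lemma base_comb_in_V0_eq_0:
  assumes "base_comb C n \<in> V\<^sub>0"
  shows "base_comb C n = (\<lambda>x. 0)"
  using base_independent[OF C assms[unfolded base_comb_def]]
  by (simp add: base_comb_def rcomb_def)

lemma base_comb_eq_0_if_isotropic_residue:
  assumes \<delta>: "\<delta> \<in> R\<^sub>0" and w: "(\<lambda>x. \<delta> x - base_comb C n x) \<in> V\<^sub>0"
  shows "base_comb C n = (\<lambda>x. 0)"
proof (rule base_comb_in_V0_eq_0)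
  show "base_comb C n \<in> V\<^sub>0"
    unfolding mem_V0_iff
  proof (intro conjI ballI base_comb_in_V)
    fix u assume u: "u \<in> V"
    have "\<langle>\<lambda>x. \<delta> x - (\<delta> x - base_comb C n x), u\<rangle> = \<langle>\<delta>, u\<rangle> - \<langle>\<lambda>x. \<delta> x - base_comb C n x, u\<rangle>"
      using \<delta> roots_representable V_representable w
      by (intro rform_diff_left) (auto simp: mem_V0_iff isotropic_roots_iff)
    also have "\<dots> = 0" using isotropic_roots_in_V0[OF \<delta>] w u by (simp add: mem_V0_iff)
    finally show "\<langle>base_comb C n, u\<rangle> = 0" by simp
  qed
qed

text \<open>Pairing the expansion \<open>\<alpha> \<equiv> \<Sum>\<beta> n\<^sub>\<beta> \<beta>\<close> (mod \<open>V\<^sup>0\<close>) with \<open>\<alpha>\<close> gives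
  \<open>2 = \<Sum>\<beta> n\<^sub>\<beta> cartan \<beta> \<alpha>\<close>, a sum of integers, so some term is positive.\<close>

lemma base_root_positive_cartan:
  assumes \<alpha>: "\<alpha> \<in> C" and n: "\<forall>\<beta>\<in>bas C. 0 \<le> n \<beta>"
    and w: "(\<lambda>x. \<alpha> x - base_comb C n x) \<in> V\<^sub>0"
  shows "\<exists>\<beta>\<in>bas C. 0 < n \<beta> \<and> 0 < Re (cartan \<beta> \<alpha>)"
proof -
  have \<alpha>x: "\<alpha> \<in> R\<^sub>x" using classes_subset[OF C] \<alpha> by blast
  then have \<alpha>R: "\<alpha> \<in> R" and \<alpha>\<alpha>: "\<langle>\<alpha>, \<alpha>\<rangle> \<noteq> 0" by (auto simp: nonisotropic_roots_iff)
  have rep: "representable \<alpha>" using roots_representable[OF \<alpha>R] .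
  have "\<langle>\<lambda>x. \<alpha> x - base_comb C n x, \<alpha>\<rangle> = 0" using w roots_in_V[OF \<alpha>R] by (simp add: mem_V0_iff)
  then have "\<langle>\<alpha>, \<alpha>\<rangle> = \<langle>base_comb C n, \<alpha>\<rangle>"
    using rep base_comb_representable by (simp add: rform_diff_left)
  also have "\<dots> = (\<Sum>\<beta>\<in>bas C. of_int (n \<beta>) * \<langle>\<beta>, \<alpha>\<rangle>)"
    unfolding base_comb_def using base_finite[OF C] base_representable[OF C]
    by (simp add: rform_rcomb_left)
  finally have "(\<Sum>\<beta>\<in>bas C. of_int (n \<beta>) * \<langle>\<beta>, \<alpha>\<rangle>) = \<langle>\<alpha>, \<alpha>\<rangle>" ..
  moreover have "(\<Sum>\<beta>\<in>bas C. of_int (n \<beta>) * cartan \<beta> \<alpha>)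
      = 2 * (\<Sum>\<beta>\<in>bas C. of_int (n \<beta>) * \<langle>\<beta>, \<alpha>\<rangle>) / \<langle>\<alpha>, \<alpha>\<rangle>"
    unfolding cartan_def by (simp add: sum_distrib_left sum_divide_distrib mult.left_commute)
  ultimately have "(\<Sum>\<beta>\<in>bas C. of_int (n \<beta>) * cartan \<beta> \<alpha>) = 2" using \<alpha>\<alpha> by simp
  define k where "k \<beta> = (SOME k::int. cartan \<beta> \<alpha> = of_int k)" for \<beta>
  have k: "cartan \<beta> \<alpha> = of_int (k \<beta>)" if "\<beta> \<in> bas C" for \<beta>
    unfolding k_def by (rule someI_ex) (use cartan_int[OF \<alpha>x] base_roots[OF C] that in blast)
  have "(\<Sum>\<beta>\<in>bas C. of_int (n \<beta>) * cartan \<beta> \<alpha>) = of_int (\<Sum>\<beta>\<in>bas C. n \<beta> * k \<beta>)"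
    using k by simp
  with \<open>(\<Sum>\<beta>\<in>bas C. of_int (n \<beta>) * cartan \<beta> \<alpha>) = 2\<close>
  have "of_int (\<Sum>\<beta>\<in>bas C. n \<beta> * k \<beta>) = (of_int 2 :: complex)" by simp
  then have "(\<Sum>\<beta>\<in>bas C. n \<beta> * k \<beta>) = 2" by (simp only: of_int_eq_iff)
  then have "\<not> (\<forall>\<beta>\<in>bas C. n \<beta> * k \<beta> \<le> 0)"
    using sum_nonpos[of "bas C" "\<lambda>\<beta>. n \<beta> * k \<beta>"] by auto
  then obtain \<beta> where "\<beta> \<in> bas C" "0 < n \<beta> * k \<beta>" by (auto simp: not_le)
  then show ?thesis using n k by (auto simp: zero_less_mult_iff)
qed

lemma class_diff_nonisotropic:
  assumes \<alpha>: "\<alpha> \<in> C" and \<beta>: "\<beta> \<in> C" and \<gamma>: "(\<lambda>h. \<alpha> h - \<beta> h) \<in> R\<^sub>x"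
  shows "(\<lambda>h. \<alpha> h - \<beta> h) \<in> C"
proof -
  have rep: "representable \<alpha>" "representable \<beta>"
    using \<alpha> \<beta> classes_subset[OF C] roots_representable by (auto simp: nonisotropic_roots_iff)
  have "\<langle>\<lambda>h. \<alpha> h - \<beta> h, \<lambda>h. \<alpha> h - \<beta> h\<rangle> \<noteq> 0" using \<gamma> by (simp add: nonisotropic_roots_iff)
  then have "\<langle>\<alpha>, \<lambda>h. \<alpha> h - \<beta> h\<rangle> \<noteq> 0 \<or> \<langle>\<beta>, \<lambda>h. \<alpha> h - \<beta> h\<rangle> \<noteq> 0"
    using rep by (auto simp: rform_diff_left)
  then show ?thesis using class_closed[OF C _ \<gamma>] \<alpha> \<beta> by blast
qed

text \<open>Induction on the height \<open>\<Sum>\<beta> n\<^sub>\<beta>\<close>: subtracting a base root \<beta> with positive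
  Cartan number from \<alpha> leaves a root; if it is nonisotropic it lies in the class again, and
  if it is isotropic the independence of the base forces it to be the residue itself.\<close>

lemma residue_in_isotropic_span_nonneg:
  "\<alpha> \<in> C \<Longrightarrow> \<forall>\<beta>\<in>bas C. 0 \<le> n \<beta> \<Longrightarrow> (\<lambda>x. \<alpha> x - base_comb C n x) \<in> V\<^sub>0 \<Longrightarrow>
    tv (\<lambda>x. \<alpha> x - base_comb C n x) \<in> span (tv ` R\<^sub>0)"
proof (induction "nat (sum n (bas C))" arbitrary: \<alpha> n rule: less_induct)
  case less
  note \<alpha> = less.prems(1) and n = less.prems(2) and w = less.prems(3)
  obtain \<beta> where \<beta>: "\<beta> \<in> bas C" "0 < n \<beta>" "0 < Re (cartan \<beta> \<alpha>)"
    using base_root_positive_cartan[OF \<alpha> n w] by blast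
  have \<alpha>x: "\<alpha> \<in> R\<^sub>x" and \<beta>C: "\<beta> \<in> C" using \<alpha> \<beta>(1) classes_subset[OF C] base_subset[OF C] by auto
  define \<gamma> where "\<gamma> = (\<lambda>h. \<alpha> h - \<beta> h)"
  define n' where "n' b = n b - (if b = \<beta> then 1 else 0)" for b
  have "(\<lambda>h. - (\<beta> h - \<alpha> h)) \<in> R"
    using roots_uminus root_diff_if_cartan_pos[OF \<alpha>x] \<beta>(1,3) base_roots[OF C] by blast
  then have \<gamma>R: "\<gamma> \<in> R" by (simp add: \<gamma>_def)
  have same: "(\<lambda>x. \<gamma> x - base_comb C n' x) = (\<lambda>x. \<alpha> x - base_comb C n x)"
    unfolding n'_def by (simp add: base_comb_remove[OF \<beta>(1)] \<gamma>_def)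
  consider "\<gamma> \<in> R\<^sub>x" | "\<gamma> \<in> R\<^sub>0" using \<gamma>R by (auto simp: nonisotropic_roots_iff isotropic_roots_iff)
  then show ?case
  proof cases
    case 1
    have "\<gamma> \<in> C" using class_diff_nonisotropic[OF \<alpha> \<beta>C] 1 by (simp add: \<gamma>_def)
    moreover have "\<forall>b\<in>bas C. 0 \<le> n' b" using n \<beta> by (auto simp: n'_def)
    moreover have "n \<beta> \<le> sum n (bas C)" using member_le_sum[OF \<beta>(1)] n base_finite[OF C] by blast
    then have "nat (sum n' (bas C)) < nat (sum n (bas C))"
      using \<beta> base_finite[OF C] by (simp add: n'_def sum_subtractf sum.delta)
    ultimately show ?thesis using less.hyps[of n' \<gamma>] same w by simp
  next
    case 2
    have "base_comb C n' = (\<lambda>x. 0)"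
      using base_comb_eq_0_if_isotropic_residue[OF 2] w same by simp
    then have "(\<lambda>x. \<alpha> x - base_comb C n x) = \<gamma>" using same by simp
    then show ?thesis using 2 by (simp add: span_base)
  qed
qed

lemma residue_in_isotropic_span:
  assumes \<alpha>: "\<alpha> \<in> C" and n: "(\<forall>\<beta>\<in>bas C. 0 \<le> n \<beta>) \<or> (\<forall>\<beta>\<in>bas C. n \<beta> \<le> 0)"
    and w: "(\<lambda>x. \<alpha> x - base_comb C n x) \<in> V\<^sub>0"
  shows "tv (\<lambda>x. \<alpha> x - base_comb C n x) \<in> span (tv ` R\<^sub>0)"
  using n
proof
  assume neg: "\<forall>\<beta>\<in>bas C. n \<beta> \<le> 0"
  have eq: "(\<lambda>x. - \<alpha> x - base_comb C (\<lambda>b. - n b) x) = (\<lambda>x. - (\<alpha> x - base_comb C n x))"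
    by (simp add: base_comb_uminus)
  have rep: "representable (\<lambda>x. \<alpha> x - base_comb C n x)"
    using w V_representable by (simp add: mem_V0_iff)
  have "tv (\<lambda>x. - (\<alpha> x - base_comb C n x)) \<in> span (tv ` R\<^sub>0)"
    using residue_in_isotropic_span_nonneg[OF class_uminus[OF C \<alpha>], of "\<lambda>b. - n b"]
      uminus_in_V0[OF w] neg
    unfolding eq by simp
  then have "- tv (\<lambda>x. \<alpha> x - base_comb C n x) \<in> span (tv ` R\<^sub>0)"
    by (simp only: tvec_uminus[OF rep])
  then show ?thesis using span_neg by fastforce
qed (use residue_in_isotropic_span_nonneg[OF \<alpha> _ w] in blast)

end

lemma HR_subset_class_sums: "H\<^sub>R \<subseteq> class_sums (span (tv ` R\<^sub>0))"
  unfolding HR_eq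
proof (intro span_minimal class_sums_subspace subspace_span subsetI)
  fix t assume "t \<in> tv ` R"
  then obtain \<gamma> where \<gamma>: "\<gamma> \<in> R" "t = tv \<gamma>" by blast
  consider "\<gamma> \<in> R\<^sub>0" | "\<gamma> \<in> R\<^sub>x" using \<gamma> by (auto simp: nonisotropic_roots_iff isotropic_roots_iff)
  then show "t \<in> class_sums (span (tv ` R\<^sub>0))"
  proof cases
    case 1
    then have "t = tv \<gamma> + (\<Sum>C\<in>{}. 0)" "tv \<gamma> \<in> span (tv ` R\<^sub>0)" using \<gamma> by (simp_all add: span_base)
    then show ?thesis unfolding class_sums_def by blast
  next
    case 2
    then obtain C where C: "C \<in> classes" "\<gamma> \<in> C" using class_of by blast
    then obtain n where n: "(\<forall>\<beta>\<in>bas C. 0 \<le> n \<beta>) \<or> (\<forall>\<beta>\<in>bas C. n \<beta> \<le> 0)"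
      and w: "(\<lambda>x. \<gamma> x - base_comb C n x) \<in> V\<^sub>0"
      using base_expansion[OF C] unfolding base_comb_def by blast
    have "t = tv (\<lambda>x. \<gamma> x - base_comb C n x) + (\<Sum>D\<in>{C}. tv (base_comb C n))"
      using \<gamma> roots_representable base_comb_representable[OF C(1)] by (simp add: tvec_diff)
    moreover have "tv (base_comb C n) \<in> Hd C"
      unfolding Hdot_def using base_comb_in_Rdot[OF C w] by (intro span_base imageI)
    ultimately show ?thesis
      unfolding class_sums_def using C(1) residue_in_isotropic_span[OF C n w] by blast
  qed
qed

lemma HR_eq_class_sums: "H\<^sub>R = class_sums H\<^sub>R\<^sub>0"
proof
  show "H\<^sub>R \<subseteq> class_sums H\<^sub>R\<^sub>0"
    using HR_subset_class_sums class_sums_mono[OF isotropic_span_subset_HR0] by blast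
  show "class_sums H\<^sub>R\<^sub>0 \<subseteq> H\<^sub>R"
    by (rule class_sums_subset_HR) (auto simp: mem_HR0_iff)
qed

lemma HR0_eq_isotropic_span: "H\<^sub>R\<^sub>0 = span (tv ` R\<^sub>0)"
proof
  show "H\<^sub>R\<^sub>0 \<subseteq> span (tv ` R\<^sub>0)"
  proof
    fix h assume h: "h \<in> H\<^sub>R\<^sub>0"
    then have "h \<in> class_sums (span (tv ` R\<^sub>0))" using HR_subset_class_sums by (auto simp: mem_HR0_iff)
    then obtain w x F where hw: "h = w + (\<Sum>C\<in>F. x C)" "finite F" "F \<subseteq> classes"
      "w \<in> span (tv ` R\<^sub>0)" "\<forall>C\<in>F. x C \<in> Hd C"
      unfolding class_sums_def by blast
    have "w - h \<in> H\<^sub>R\<^sub>0"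
      using subspace_diff[OF HR0_subspace] isotropic_span_subset_HR0 hw(4) h by blast
    moreover have "(w - h) + (\<Sum>C\<in>F. x C) = 0" using hw(1) by simp
    ultimately have "w - h = 0" using class_sums_unique hw(2,3,5) by blast
    then show "h \<in> span (tv ` R\<^sub>0)" using hw(4) by simp
  qed
qed (rule isotropic_span_subset_HR0)

end

theorem lemma2p4:
  fixes smult :: "complex \<Rightarrow> 'g::ab_group_add \<Rightarrow> 'g"
    and br :: "'g \<Rightarrow> 'g \<Rightarrow> 'g"
    and B :: "'g \<Rightarrow> 'g \<Rightarrow> complex"
    and H :: "'g set"
    and bas :: "('g \<Rightarrow> complex) set \<Rightarrow> ('g \<Rightarrow> complex) set"
  assumes grla: "GRLA smult br B H"
    and bases: "\<forall>C\<in>root_classes br smult B H. base_preimage br smult B H C (bas C)"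
  shows "(\<forall>C\<in>root_classes br smult B H. \<forall>x\<in>Hdot br smult B H C (bas C).
            (\<forall>y\<in>Hdot br smult B H C (bas C). B x y = 0) \<longrightarrow> x = 0)
    \<and> HR br smult B H = {x0 + (\<Sum>C\<in>F. x C) | x0 x F. finite F \<and> F \<subseteq> root_classes br smult B H \<and>
            x0 \<in> HR0 br smult B H \<and> (\<forall>C\<in>F. x C \<in> Hdot br smult B H C (bas C))}
    \<and> (\<forall>x0 x F. finite F \<and> F \<subseteq> root_classes br smult B H \<and> x0 \<in> HR0 br smult B H \<and>
            (\<forall>C\<in>F. x C \<in> Hdot br smult B H C (bas C)) \<and> x0 + (\<Sum>C\<in>F. x C) = 0
            \<longrightarrow> x0 = 0 \<and> (\<forall>C\<in>F. x C = 0))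
    \<and> HR0 br smult B H = module.span smult (tvec B H ` isotropic_roots br smult B H)"
proof -
  interpret grla_bases smult br B H bas
    using grla bases by (simp add: grla_bases_def grla_bases_axioms_def grla_def)
  show ?thesis
  proof (fold class_sums_def, intro conjI)
    show "H\<^sub>R = class_sums H\<^sub>R\<^sub>0" by (rule HR_eq_class_sums)
    show "H\<^sub>R\<^sub>0 = span (tv ` R\<^sub>0)" by (rule HR0_eq_isotropic_span)
  qed (use Hd_nondegenerate class_sums_unique in blast)+
qed

end
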